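(* Let $\gamma:\mathbb N\to[0,1]$ be a rate function. For every process distribution $\mu\in\mathscr C^\alpha$ with coordinate process $\mathbf X$, $\mu$-almost surely \[\lim_{t\to\infty}g_t(\mathbf X)=\begin{cases}+1&\text{if }\mu\in\mathscr C^\alpha\cap\mathscr R^\alpha_\gamma,\\-1&\text{if }\mu\in\mathscr C^\alpha\setminus\mathscr R^\alpha_\gamma.\end{cases}\]
   Context: $X_t$ is the $t$-th coordinate of $[0,1]^{\mathbb N}$. $\alpha(\mathfrak U,\mathfrak V):=\sup_{U\in\mathfrak U,V\in\mathfrak V}|\mu(U\cap V)-\mu(U)\mu(V)|$; $\alpha(m):=\sup_j\alpha(\sigma(X_1,\dots,X_j),\sigma(X_t:t\ge j+m))$; $\|\boldsymbol\alpha\|:=\sum_m\alpha(m)$. $\mathscr C^\alpha$ is the class of stationary $\alpha$-mixing processes with $\|\boldsymbol\alpha\|<\infty$; $\mathscr R^\alpha_\gamma$ is the class of processes with $\alpha(m)\le\gamma(m)$ for all $m\in\mathbb N$. Dyadic sets: $I_{\ell,i}=[i2^{-\ell},(i+1)2^{-\ell})$, $i=0,\dots,2^\ell-1$ (last interval closed); $\Delta_{k,\ell}$ the cubes $I_{\ell,i_1}\times\cdots\times I_{\ell,i_k}$; $\mathcal D_{k,\ell}$ the unions of cubes of $\Delta_{k,\ell}$. Empirical estimator: for $n>m$, $j\in\{1,\dots,n-m\}$, $j':=n-m-j+1$, $\mu_t(\mathbf X,B):=\frac1t\sum_{i=0}^{t-1}\mathbf 1\{(X_{ik+1},\dots,X_{(i+1)k})\in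 B\}$ for $B\subseteq[0,1]^k$, $\gamma_{t,n}^{m,j}(\mathbf X,A,B):=\frac1t\sum_{i=0}^{t-1}\mathbf 1\{(X_{in+1},\dots,X_{in+j})\in A\}\mathbf 1\{(X_{in+j+m},\dots,X_{(i+1)n})\in B\}$, $\widehat\alpha_{t,n}^{\ell}(\mathbf X,m):=\max_{j}\max_{A\in\mathcal D_{j,\ell},B\in\mathcal D_{j',\ell}}|\gamma_{t,n}^{m,j}(\mathbf X,A,B)-\mu_t(\mathbf X,A)\mu_t(\mathbf X,B)|$. Parameters: $(M_t),(\ell_t),(n_t)$ increasing sequences of positive integers with $n_t>M_t$; $\delta\in(0,1)$, $(\delta_t)$ positive with $\sum_t\delta_t=\delta$; $(\epsilon_t)$ decreasing positive with $\epsilon_t\to0$. With $C_{m,\ell,n}:=m\cdot2^{2^{n\ell}+2^{m\ell+1}+1}$, for each $m$ let $\tau_t(m):=\lceil C_{m,\ell_t,n_t}/(m\epsilon_t^2\delta_t)\rceil$ and $\widehat\alpha_t(\mathbf X,m):=\widehat\alpha_{\tau_t(m),n_t}^{\ell_t}(\mathbf X,m)$. The test is $g_t(\mathbf X):=+1$ if $\widehat\alpha_t(\mathbf X,m)\le\gamma(m)+\epsilon_t$ for all $m\in\{1,\dots,M_t\}$, and $g_t(\mathbf X):=-1$ otherwise. *)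

theory Defs
  imports "HOL-Probability.Probability"
begin

text \<open>A sample path is \<open>\<omega> :: nat \<Rightarrow> real\<close>; the paper's coordinate X_t (t = 1,2,...)
  is \<open>\<omega> (t - 1)\<close>.\<close>

definition Omega :: "(nat \<Rightarrow> real) measure" where
  "Omega = (\<Pi>\<^sub>M i\<in>(UNIV::nat set). restrict_space borel {0..1::real})"

definition coord :: "nat \<Rightarrow> (nat \<Rightarrow> real) \<Rightarrow> real" where
  "coord t \<omega> = \<omega> (t - 1)"

definition process_distribution :: "(nat \<Rightarrow> real) measure \<Rightarrow> bool" where
  "process_distribution \<mu> \<longleftrightarrow> prob_space \<mu> \<and> sets \<mu> = sets Omega"

definition stationary :: "(nat \<Rightarrow> real) measure \<Rightarrow> bool" where
  "stationary \<mu> \<longleftrightarrow> distr \<mu> Omega (\<lambda>\<omega> i. \<omega> (Suc i)) = \<mu>"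

definition gen_sigma :: "nat set \<Rightarrow> (nat \<Rightarrow> real) set set" where
  "gen_sigma T = sigma_sets (space Omega)
      (\<Union>t\<in>T. {coord t -` B \<inter> space Omega | B. B \<in> sets (borel :: real measure)})"

definition alpha_coef :: "(nat \<Rightarrow> real) measure \<Rightarrow> nat \<Rightarrow> real" where
  "alpha_coef \<mu> m = (\<Squnion>j\<in>{1..}. \<Squnion>p\<in>gen_sigma {1..j} \<times> gen_sigma {j+m..}.
       \<bar>measure \<mu> (fst p \<inter> snd p) - measure \<mu> (fst p) * measure \<mu> (snd p)\<bar>)"

definition class_C :: "(nat \<Rightarrow> real) measure set" where
  "class_C = {\<mu>. process_distribution \<mu> \<and> stationary \<mu> \<and>
                 summable (\<lambda>m. alpha_coef \<mu> (Suc m))}"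

definition class_R :: "(nat \<Rightarrow> real) \<Rightarrow> (nat \<Rightarrow> real) measure set" where
  "class_R \<gamma> = {\<mu>. process_distribution \<mu> \<and> (\<forall>m\<ge>1. alpha_coef \<mu> m \<le> \<gamma> m)}"

definition dyadic_interval :: "nat \<Rightarrow> nat \<Rightarrow> real set" where
  "dyadic_interval l i =
     (if i = 2^l - 1 then {real i / 2^l .. (real i + 1) / 2^l}
      else {real i / 2^l ..< (real i + 1) / 2^l})"

text \<open>Points of [0,1]^k are lists of length k.\<close>
definition dyadic_cube :: "nat \<Rightarrow> nat list \<Rightarrow> real list set" where
  "dyadic_cube l is = {xs. length xs = length is \<and>
                          (\<forall>r<length is. xs ! r \<in> dyadic_interval l (is ! r))}"

definition dyadic_cube_indices :: "nat \<Rightarrow> nat \<Rightarrow> nat list set" where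
  "dyadic_cube_indices k l = {is. length is = k \<and> (\<forall>r<k. is ! r < 2^l)}"

definition dyadic_unions :: "nat \<Rightarrow> nat \<Rightarrow> real list set set" where
  "dyadic_unions k l = {\<Union>(dyadic_cube l ` S) | S. S \<subseteq> dyadic_cube_indices k l}"

definition seg :: "(nat \<Rightarrow> real) \<Rightarrow> nat \<Rightarrow> nat \<Rightarrow> real list" where
  "seg \<omega> a k = map (\<lambda>r. coord (a + r + 1) \<omega>) [0..<k]"

definition mu_emp :: "(nat \<Rightarrow> real) \<Rightarrow> nat \<Rightarrow> nat \<Rightarrow> real list set \<Rightarrow> real" where
  "mu_emp \<omega> k t B = (\<Sum>i<t. indicator B (seg \<omega> (i * k) k)) / real t"

text \<open>\<open>\<gamma>^{m,j}_{t,n}(X,A,B)\<close>, with \<open>j' = n - m - j + 1\<close>\<close>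
definition gam_emp :: "(nat \<Rightarrow> real) \<Rightarrow> nat \<Rightarrow> nat \<Rightarrow> nat \<Rightarrow> nat \<Rightarrow>
                        real list set \<Rightarrow> real list set \<Rightarrow> real" where
  "gam_emp \<omega> t n m j A B =
     (\<Sum>i<t. indicator A (seg \<omega> (i * n) j) *
             indicator B (seg \<omega> (i * n + j + m - 1) (n - m - j + 1))) / real t"

text \<open>\<open>\<alpha>-hat^l_{t,n}(X,m)\<close> (for \<open>n > m\<close>)\<close>
definition alpha_hat :: "(nat \<Rightarrow> real) \<Rightarrow> nat \<Rightarrow> nat \<Rightarrow> nat \<Rightarrow> nat \<Rightarrow> real" where
  "alpha_hat \<omega> t n l m =
     Max {\<bar>gam_emp \<omega> t n m j A B - mu_emp \<omega> j t A * mu_emp \<omega> (n - m - j + 1) t B\<bar> | j A B.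
            j \<in> {1..n - m} \<and> A \<in> dyadic_unions j l \<and> B \<in> dyadic_unions (n - m - j + 1) l}"

definition C_const :: "nat \<Rightarrow> nat \<Rightarrow> nat \<Rightarrow> nat" where
  "C_const m l n = m * 2 ^ (2 ^ (n * l) + 2 ^ (m * l + 1) + 1)"

definition tau :: "(nat \<Rightarrow> nat) \<Rightarrow> (nat \<Rightarrow> nat) \<Rightarrow> (nat \<Rightarrow> real) \<Rightarrow> (nat \<Rightarrow> real) \<Rightarrow>
                    nat \<Rightarrow> nat \<Rightarrow> nat" where
  "tau ls ns \<delta>s \<epsilon> t m =
     nat \<lceil>real (C_const m (ls t) (ns t)) / (real m * (\<epsilon> t)\<^sup>2 * \<delta>s t)\<rceil>"

definition alpha_hat_t :: "(nat \<Rightarrow> nat) \<Rightarrow> (nat \<Rightarrow> nat) \<Rightarrow> (nat \<Rightarrow> real) \<Rightarrow> (nat \<Rightarrow> real) \<Rightarrow>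
                           nat \<Rightarrow> (nat \<Rightarrow> real) \<Rightarrow> nat \<Rightarrow> real" where
  "alpha_hat_t ls ns \<delta>s \<epsilon> t \<omega> m = alpha_hat \<omega> (tau ls ns \<delta>s \<epsilon> t m) (ns t) (ls t) m"

definition test_g :: "(nat \<Rightarrow> real) \<Rightarrow> (nat \<Rightarrow> nat) \<Rightarrow> (nat \<Rightarrow> nat) \<Rightarrow> (nat \<Rightarrow> nat) \<Rightarrow>
                      (nat \<Rightarrow> real) \<Rightarrow> (nat \<Rightarrow> real) \<Rightarrow> nat \<Rightarrow> (nat \<Rightarrow> real) \<Rightarrow> real" where
  "test_g \<gamma> Ms ls ns \<delta>s \<epsilon> t \<omega> =
     (if \<forall>m\<in>{1..Ms t}. alpha_hat_t ls ns \<delta>s \<epsilon> t \<omega> m \<le> \<gamma> m + \<epsilon> t then 1 else -1)"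

end

theory Submission
  imports Defs
begin

text \<open>Both halves of the consistency argument rest on one uniform estimate. Quantize the
  coordinates dyadically; the empirical frequencies entering \<open>\<alpha>-hat\<close> are then averages of
  indicators of cylinder events along disjoint blocks. By stationarity these indicators have a common
  mean, and by \<open>\<alpha>\<close>-mixing their covariances are bounded by mixing coefficients, so Chebyshev's
  inequality bounds each deviation probability by \<open>(1 + 2 \<Sum>\<alpha>) / (\<tau> \<epsilon>\<^sup>2)\<close>. The sample sizes
  \<open>\<tau>_t(m)\<close> are chosen so large that the union over all \<open>m\<close>, \<open>j\<close> and dyadic unions of these bad
  events has probability \<open>O(\<delta>_t)\<close>; as \<open>\<Sum> \<delta>_t < \<infinity>\<close>, Borel--Cantelli shows that almost surely,
  from some stage on, every estimated dependence is within \<open>\<epsilon>_t\<close> of the true dependence of the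
  corresponding cylinders.

  If \<open>\<alpha>(m) \<le> \<gamma>(m)\<close> for all \<open>m\<close>, every estimate is then at most \<open>\<gamma>(m) + \<epsilon>_t\<close> and the test
  accepts. If \<open>\<alpha>(m) > \<gamma>(m)\<close> for some \<open>m\<close>, a past event and a future event witnessing this
  can be approximated in measure by cylinders, which for large \<open>t\<close> are among the dyadic unions
  examined; since \<open>\<epsilon>_t \<to> 0\<close> the corresponding estimate eventually exceeds \<open>\<gamma>(m) + \<epsilon>_t\<close>.\<close>

lemma space_Omega: "space Omega = {\<omega>. \<forall>i. \<omega> i \<in> {0..1::real}}"
  unfolding Omega_def by (auto simp: space_PiM PiE_def Pi_def)

lemma space_OmegaD: "\<omega> \<in> space Omega \<Longrightarrow> \<omega> i \<in> {0..1}"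
  by (simp add: space_Omega)

lemma mult_minus_one_div:
  assumes "0 < (a::nat)" "0 < q" shows "(a * q - 1) div q = a - 1"
proof -
  obtain b r where "a = Suc b" "q = Suc r" using assms by (cases a; cases q) auto
  then have "a * q - 1 = r + b * q" "r < q" by simp_all
  then show ?thesis using \<open>a = Suc b\<close> by simp
qed

lemma abs_mult_diff_le:
  fixes a b a' b' :: real
  assumes "0 \<le> b" "b \<le> 1" "0 \<le> a'" "a' \<le> 1"
  shows "\<bar>a * b - a' * b'\<bar> \<le> \<bar>a - a'\<bar> + \<bar>b - b'\<bar>"
proof -
  have "\<bar>a * b - a' * b'\<bar> = \<bar>(a - a') * b + a' * (b - b')\<bar>" by (simp add: algebra_simps)
  also have "\<dots> \<le> \<bar>a - a'\<bar> * b + a' * \<bar>b - b'\<bar>"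
    using assms abs_triangle_ineq[of "(a - a') * b" "a' * (b - b')"] by (simp add: abs_mult)
  also have "\<dots> \<le> \<bar>a - a'\<bar> + \<bar>b - b'\<bar>"
    using assms by (intro add_mono mult_left_le mult_left_le_one_le) auto
  finally show ?thesis .
qed

lemma average_indicator_bounds:
  fixes G :: "nat \<Rightarrow> 'a set"
  shows "0 \<le> (\<Sum>i<t. indicator (G i) x) / real t" "(\<Sum>i<t. indicator (G i) x) / real t \<le> (1::real)"
proof -
  have "(\<Sum>i<t. indicator (G i) x) \<le> (\<Sum>i<t. 1::real)"
    by (intro sum_mono) (auto split: split_indicator)
  then show "(\<Sum>i<t. indicator (G i) x) / real t \<le> (1::real)"
    by (cases "t = 0") (auto simp: divide_le_eq)
qed (intro divide_nonneg_nonneg sum_nonneg; simp)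

subsection \<open>Dyadic quantization and cylinder sets\<close>

text \<open>The last dyadic interval is closed, so \<open>1\<close> gets index \<open>2^l - 1\<close>.\<close>

definition dyadic_index :: "nat \<Rightarrow> real \<Rightarrow> nat" where
  "dyadic_index l x = (if x < 1 then nat \<lfloor>x * 2^l\<rfloor> else 2^l - 1)"

lemma dyadic_index_less: assumes "x \<in> {0..1}" shows "dyadic_index l x < 2^l"
proof (cases "x < 1")
  case True
  then have "\<lfloor>x * 2^l\<rfloor> < 2^l" by (simp add: floor_less_iff)
  then show ?thesis using True assms unfolding dyadic_index_def by (simp add: nat_less_iff)
qed (simp add: dyadic_index_def)

lemma dyadic_index_bounds:
  assumes "x \<in> {0..1}"
  shows "real (dyadic_index l x) \<le> x * 2^l" "x * 2^l \<le> real (dyadic_index l x) + 1"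
    "x < 1 \<Longrightarrow> x * 2^l < real (dyadic_index l x) + 1"
proof -
  have "0 \<le> \<lfloor>x * 2^l\<rfloor>" using assms by simp
  moreover have "real (2^l - 1::nat) = 2^l - 1" by (simp add: of_nat_diff)
  ultimately show "real (dyadic_index l x) \<le> x * 2^l" "x * 2^l \<le> real (dyadic_index l x) + 1"
    "x < 1 \<Longrightarrow> x * 2^l < real (dyadic_index l x) + 1"
    using assms unfolding dyadic_index_def by (auto simp: of_nat_nat)
qed

lemma dyadic_index_approx:
  assumes "x \<in> {0..1}" shows "\<bar>real (dyadic_index l x) / 2^l - x\<bar> \<le> 1 / 2^l"
proof -
  have "\<bar>real (dyadic_index l x) - x * 2^l\<bar> \<le> 1"
    using dyadic_index_bounds(1,2)[OF assms, of l] by linarith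
  moreover have "real (dyadic_index l x) / 2^l - x = (real (dyadic_index l x) - x * 2^l) / 2^l"
    by (simp add: field_simps)
  ultimately show ?thesis by (simp add: abs_divide divide_right_mono)
qed

lemma mem_dyadic_interval_iff:
  assumes "x \<in> {0..1}" "i < 2^l"
  shows "x \<in> dyadic_interval l i \<longleftrightarrow> dyadic_index l x = i"
proof -
  have top: "real (2^l - 1 :: nat) = 2^l - 1" by (simp add: of_nat_diff)
  have i: "real i + 1 \<le> 2^l"
    using assms(2) by (metis Suc_leI of_nat_Suc of_nat_le_iff of_nat_numeral of_nat_power add.commute)
  have "x \<in> dyadic_interval l i \<longleftrightarrow>
    real i \<le> x * 2^l \<and> (if i = 2^l - 1 then x \<le> 1 else x * 2^l < real i + 1)"
    using top unfolding dyadic_interval_def by (auto simp: field_simps)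
  also have "\<dots> \<longleftrightarrow> dyadic_index l x = i"
  proof (cases "x < 1")
    case True
    have "(real i \<le> x * 2^l \<and> x * 2^l < real i + 1) \<longleftrightarrow> \<lfloor>x * 2^l\<rfloor> = int i"
      by (simp add: floor_eq_iff)
    moreover have "0 \<le> \<lfloor>x * 2^l\<rfloor>" using assms by simp
    moreover have "x * 2^l < 2^l" using True by simp
    ultimately show ?thesis using True assms top unfolding dyadic_index_def
      by (auto simp: nat_eq_iff)
  next
    case False
    then have "x = 1" using assms by simp
    then show ?thesis using i top unfolding dyadic_index_def by auto
  qed
  finally show ?thesis .
qed

lemma dyadic_index_refine:
  assumes "x \<in> {0..1}" "l \<le> l'"
  shows "dyadic_index l x = dyadic_index l' x div 2^(l' - l)"
proof (cases "x < 1")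
  case True
  have "(2::real)^l' = 2^l * 2^(l' - l)" using assms(2) by (simp flip: power_add)
  then have "\<lfloor>x * 2^l\<rfloor> = \<lfloor>(x * 2^l') / real_of_int (2^(l' - l))\<rfloor>" by simp
  also have "\<dots> = \<lfloor>x * 2^l'\<rfloor> div 2^(l' - l)" by (rule floor_divide_real_eq_div) simp
  finally have "\<lfloor>x * 2^l\<rfloor> = \<lfloor>x * 2^l'\<rfloor> div 2^(l' - l)" .
  moreover have "0 \<le> \<lfloor>x * 2^l'\<rfloor>" using assms by simp
  ultimately show ?thesis using True unfolding dyadic_index_def by (simp add: nat_div_distrib nat_power_eq)
next
  case False
  have "(2::nat)^l' = 2^l * 2^(l' - l)" using assms(2) by (simp flip: power_add)
  then show ?thesis using False mult_minus_one_div[of "2^l" "2^(l' - l)"] unfolding dyadic_index_def by simp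
qed

lemma dyadic_index_measurable[measurable]: "dyadic_index l \<in> measurable borel (count_space UNIV)"
  unfolding dyadic_index_def by measurable

definition dyadic_code :: "nat \<Rightarrow> nat \<Rightarrow> nat \<Rightarrow> (nat \<Rightarrow> real) \<Rightarrow> nat list" where
  "dyadic_code l a k \<omega> = map (\<lambda>r. dyadic_index l (\<omega> (a + r))) [0..<k]"

definition cylinder :: "nat \<Rightarrow> nat \<Rightarrow> nat \<Rightarrow> nat list set \<Rightarrow> (nat \<Rightarrow> real) set" where
  "cylinder a k l S = {\<omega> \<in> space Omega. dyadic_code l a k \<omega> \<in> S}"

lemma length_seg[simp]: "length (seg \<omega> a k) = k"
  by (simp add: seg_def)

lemma nth_seg[simp]: "r < k \<Longrightarrow> seg \<omega> a k ! r = \<omega> (a + r)"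
  by (simp add: seg_def coord_def)

lemma length_dyadic_code[simp]: "length (dyadic_code l a k \<omega>) = k"
  by (simp add: dyadic_code_def)

lemma nth_dyadic_code[simp]: "r < k \<Longrightarrow> dyadic_code l a k \<omega> ! r = dyadic_index l (\<omega> (a + r))"
  by (simp add: dyadic_code_def)

lemma dyadic_code_in_indices: "\<omega> \<in> space Omega \<Longrightarrow> dyadic_code l a k \<omega> \<in> dyadic_cube_indices k l"
  unfolding dyadic_cube_indices_def by (auto intro!: dyadic_index_less space_OmegaD)

lemma dyadic_cube_indices_lists: "dyadic_cube_indices k l = {xs. set xs \<subseteq> {..<2^l} \<and> length xs = k}"
  unfolding dyadic_cube_indices_def
  by (auto simp: in_set_conv_nth) (metis lessThan_iff nth_mem subsetD)

lemma finite_dyadic_cube_indices: "finite (dyadic_cube_indices k l)"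
  by (simp add: dyadic_cube_indices_lists finite_lists_length_eq)

lemma card_dyadic_cube_indices: "card (dyadic_cube_indices k l) = 2^(l * k)"
  by (simp add: dyadic_cube_indices_lists card_lists_length_eq power_mult)

lemma seg_in_dyadic_cube_iff:
  assumes "\<omega> \<in> space Omega" "is \<in> dyadic_cube_indices k l"
  shows "seg \<omega> a k \<in> dyadic_cube l is \<longleftrightarrow> dyadic_code l a k \<omega> = is"
proof -
  have len: "length is = k" and lt: "\<And>r. r < k \<Longrightarrow> is ! r < 2^l"
    using assms(2) unfolding dyadic_cube_indices_def by auto
  have "seg \<omega> a k \<in> dyadic_cube l is \<longleftrightarrow> (\<forall>r<k. dyadic_index l (\<omega> (a + r)) = is ! r)"
    unfolding dyadic_cube_def using len lt mem_dyadic_interval_iff[OF space_OmegaD[OF assms(1)]] by auto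
  also have "\<dots> \<longleftrightarrow> dyadic_code l a k \<omega> = is"
    using len by (auto simp: list_eq_iff_nth_eq)
  finally show ?thesis .
qed

lemma indicator_dyadic_union_seg:
  assumes "\<omega> \<in> space Omega" "S \<subseteq> dyadic_cube_indices k l"
  shows "indicator (\<Union>(dyadic_cube l ` S)) (seg \<omega> a k) = (indicator (cylinder a k l S) \<omega> :: real)"
proof -
  have "seg \<omega> a k \<in> dyadic_cube l c \<longleftrightarrow> dyadic_code l a k \<omega> = c" if "c \<in> S" for c
    using seg_in_dyadic_cube_iff[OF assms(1)] assms(2) that by blast
  then have "seg \<omega> a k \<in> \<Union>(dyadic_cube l ` S) \<longleftrightarrow> dyadic_code l a k \<omega> \<in> S"
    by blast
  then show ?thesis using assms(1) unfolding cylinder_def indicator_def by auto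
qed

definition refine_codes :: "nat \<Rightarrow> nat \<Rightarrow> nat \<Rightarrow> nat \<Rightarrow> nat list set \<Rightarrow> nat list set" where
  "refine_codes k l k' l' S =
     {c \<in> dyadic_cube_indices k' l'. map (\<lambda>i. i div 2^(l' - l)) (take k c) \<in> S}"

lemma refine_codes_subset: "refine_codes k l k' l' S \<subseteq> dyadic_cube_indices k' l'"
  unfolding refine_codes_def by auto

lemma cylinder_refine:
  assumes "k \<le> k'" "l \<le> l'"
  shows "cylinder a k l S = cylinder a k' l' (refine_codes k l k' l' S)"
proof -
  have "dyadic_code l a k \<omega> = map (\<lambda>i. i div 2^(l' - l)) (take k (dyadic_code l' a k' \<omega>))"
    if "\<omega> \<in> space Omega" for \<omega>
    using assms by (auto simp: list_eq_iff_nth_eq dyadic_index_refine[OF space_OmegaD[OF that]])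
  then show ?thesis unfolding cylinder_def refine_codes_def using dyadic_code_in_indices by auto
qed

lemma cylinder_compl: "space Omega - cylinder a k l S = cylinder a k l (dyadic_cube_indices k l - S)"
  unfolding cylinder_def using dyadic_code_in_indices by auto

lemma cylinder_Un: "cylinder a k l S \<union> cylinder a k l S' = cylinder a k l (S \<union> S')"
  unfolding cylinder_def by auto

lemma cylinder_subset_space: "cylinder a k l S \<subseteq> space Omega"
  unfolding cylinder_def by auto

lemma sigma_algebra_gen_sigma: "sigma_algebra (space Omega) (gen_sigma T)"
  unfolding gen_sigma_def by (rule sigma_algebra_sigma_sets) auto

lemma gen_sigma_mono: "T \<subseteq> T' \<Longrightarrow> gen_sigma T \<subseteq> gen_sigma T'"
  unfolding gen_sigma_def by (rule sigma_sets_mono') blast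

lemma empty_in_gen_sigma: "{} \<in> gen_sigma T"
  unfolding gen_sigma_def by (rule sigma_sets.Empty)

lemma coord_measurable[measurable]: "coord t \<in> borel_measurable Omega"
proof -
  have "(\<lambda>\<omega>. \<omega> (t - 1)) \<in> measurable Omega (restrict_space borel {0..1::real})"
    unfolding Omega_def by (rule measurable_component_singleton) simp
  then show ?thesis
    unfolding coord_def[abs_def] using measurable_restrict_space2_iff by blast
qed

lemma gen_sigma_subset_sets: "gen_sigma T \<subseteq> sets Omega"
  unfolding gen_sigma_def
  by (rule sets.sigma_sets_subset) (auto intro!: measurable_sets[OF coord_measurable])

lemma vimage_coord_in_gen_sigma:
  "t \<in> T \<Longrightarrow> B \<in> sets borel \<Longrightarrow> coord t -` B \<inter> space Omega \<in> gen_sigma T"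
  unfolding gen_sigma_def by (rule sigma_sets.Basic) blast

lemma dyadic_index_eq_sets: "{x. dyadic_index l x = c} \<in> sets borel"
  using measurable_sets[OF dyadic_index_measurable, of "{c}" l] by (simp add: vimage_def)

lemma dyadic_code_eq_in_gen_sigma:
  "{\<omega> \<in> space Omega. dyadic_code l a k \<omega> = c} \<in> gen_sigma {a+1..a+k}"
proof -
  interpret G: sigma_algebra "space Omega" "gen_sigma {a+1..a+k}"
    by (rule sigma_algebra_gen_sigma)
  consider "length c = k" "0 < k" | "length c \<noteq> k" | "k = 0" by blast
  then show ?thesis
  proof cases
    case 1
    have "dyadic_code l a k \<omega> = c \<longleftrightarrow> (\<forall>r<k. dyadic_index l (\<omega> (a + r)) = c ! r)" for \<omega>
      using 1 by (simp add: list_eq_iff_nth_eq)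
    then have "{\<omega> \<in> space Omega. dyadic_code l a k \<omega> = c} =
      (\<Inter>r<k. coord (a + r + 1) -` {x. dyadic_index l x = c ! r} \<inter> space Omega)"
      using 1 by (auto simp: coord_def)
    also have "\<dots> \<in> gen_sigma {a+1..a+k}"
      using 1 by (intro G.finite_INT vimage_coord_in_gen_sigma dyadic_index_eq_sets) auto
    finally show ?thesis .
  next
    case 2
    then have "{\<omega> \<in> space Omega. dyadic_code l a k \<omega> = c} = {}"
      by (metis (mono_tags, lifting) Collect_empty_eq length_dyadic_code)
    then show ?thesis using G.empty_sets by metis
  next
    case 3
    show ?thesis
    proof (cases "c = []")
      case True
      then have "{\<omega> \<in> space Omega. dyadic_code l a k \<omega> = c} = space Omega"
        using 3 by (auto simp: dyadic_code_def)
      then show ?thesis using G.top by metis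
    next
      case False
      then have "{\<omega> \<in> space Omega. dyadic_code l a k \<omega> = c} = {}"
        using 3 by (auto simp: dyadic_code_def)
      then show ?thesis using G.empty_sets by metis
    qed
  qed
qed
lemma cylinder_in_gen_sigma: "cylinder a k l S \<in> gen_sigma {a+1..a+k}"
proof -
  interpret G: sigma_algebra "space Omega" "gen_sigma {a+1..a+k}"
    by (rule sigma_algebra_gen_sigma)
  have "cylinder a k l S =
    (\<Union>c\<in>S \<inter> dyadic_cube_indices k l. {\<omega> \<in> space Omega. dyadic_code l a k \<omega> = c})"
    unfolding cylinder_def using dyadic_code_in_indices by auto
  also have "\<dots> \<in> gen_sigma {a+1..a+k}"
    using finite_dyadic_cube_indices dyadic_code_eq_in_gen_sigma by (intro G.finite_UN) auto
  finally show ?thesis .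
qed

lemma sets_cylinder: "cylinder a k l S \<in> sets Omega"
  using cylinder_in_gen_sigma gen_sigma_subset_sets by blast

definition shift_path :: "nat \<Rightarrow> (nat \<Rightarrow> real) \<Rightarrow> (nat \<Rightarrow> real)" where
  "shift_path a \<omega> = (\<lambda>i. \<omega> (i + a))"

lemma shift_path_measurable: "shift_path a \<in> measurable Omega Omega"
proof -
  have "(\<lambda>\<omega> i. \<omega> (i + a)) \<in> measurable Omega Omega"
    unfolding Omega_def by (rule measurable_PiM_single') (auto simp: space_PiM)
  then show ?thesis unfolding shift_path_def[abs_def] .
qed

lemma shift_path_Suc: "shift_path (Suc a) = shift_path 1 \<circ> shift_path a"
  by (auto simp: shift_path_def fun_eq_iff)

lemma cylinder_shift: "cylinder (a + b) k l S = shift_path a -` cylinder b k l S \<inter> space Omega"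
proof -
  have "dyadic_code l (a + b) k \<omega> = dyadic_code l b k (shift_path a \<omega>)" for \<omega>
    by (simp add: dyadic_code_def shift_path_def ac_simps)
  moreover have "shift_path a \<omega> \<in> space Omega" if "\<omega> \<in> space Omega" for \<omega>
    using that by (simp add: space_Omega shift_path_def)
  ultimately show ?thesis unfolding cylinder_def by auto
qed

subsection \<open>Stationarity and mixing coefficients\<close>

locale mixing_process =
  fixes \<mu> :: "(nat \<Rightarrow> real) measure"
  assumes in_class_C: "\<mu> \<in> class_C"
begin

lemma prob_space: "prob_space \<mu>"
  and sets_eq: "sets \<mu> = sets Omega"
  and stationary: "stationary \<mu>"
  and summable_alpha_coef: "summable (\<lambda>m. alpha_coef \<mu> (Suc m))"
  using in_class_C unfolding class_C_def process_distribution_def by auto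

sublocale prob_space \<mu> by (rule prob_space)

lemma space_eq: "space \<mu> = space Omega"
  using sets_eq by (rule sets_eq_imp_space_eq)

lemma measurable_eq: "measurable \<mu> N = measurable Omega N"
  by (rule measurable_cong_sets[OF sets_eq refl])

lemma gen_sigma_subset_sets_mu: "gen_sigma T \<subseteq> sets \<mu>"
  using gen_sigma_subset_sets sets_eq by simp

lemma sets_cylinder_mu[measurable]: "cylinder a k l S \<in> sets \<mu>"
  using sets_cylinder sets_eq by simp

lemma distr_shift_path: "distr \<mu> Omega (shift_path a) = \<mu>"
proof (induction a)
  case 0
  have "distr \<mu> Omega (shift_path 0) = distr \<mu> \<mu> (\<lambda>x. x)"
    by (intro distr_cong) (simp_all add: sets_eq shift_path_def)
  then show ?case by simp
next
  case (Suc a)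
  have "distr \<mu> Omega (shift_path (Suc a)) = distr (distr \<mu> Omega (shift_path a)) Omega (shift_path 1)"
    unfolding shift_path_Suc
    by (rule distr_distr[symmetric]) (simp_all add: shift_path_measurable measurable_eq)
  also have "\<dots> = distr \<mu> Omega (shift_path 1)"
    using Suc by simp
  also have "shift_path 1 = (\<lambda>\<omega> i. \<omega> (Suc i))"
    by (simp add: shift_path_def fun_eq_iff)
  also have "distr \<mu> Omega \<dots> = \<mu>"
    using stationary unfolding stationary_def .
  finally show ?case .
qed

lemma measure_shift_path_vimage:
  assumes "E \<in> sets Omega"
  shows "measure \<mu> (shift_path a -` E \<inter> space Omega) = measure \<mu> E"
proof -
  have "measure \<mu> E = measure (distr \<mu> Omega (shift_path a)) E"
    by (simp add: distr_shift_path)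
  also have "\<dots> = measure \<mu> (shift_path a -` E \<inter> space \<mu>)"
    by (rule measure_distr) (simp_all add: shift_path_measurable measurable_eq assms)
  finally show ?thesis by (simp add: space_eq)
qed

lemma measure_cylinder_shift: "measure \<mu> (cylinder a k l S) = measure \<mu> (cylinder 0 k l S)"
  using measure_shift_path_vimage[OF sets_cylinder, of a 0 k l S] cylinder_shift[of a 0 k l S]
  by simp

definition dependence :: "(nat \<Rightarrow> real) set \<Rightarrow> (nat \<Rightarrow> real) set \<Rightarrow> real" where
  "dependence A B = \<bar>measure \<mu> (A \<inter> B) - measure \<mu> A * measure \<mu> B\<bar>"

lemma alpha_coef_altdef:
  "alpha_coef \<mu> m = (\<Squnion>j\<in>{1..}. \<Squnion>(A, B)\<in>gen_sigma {1..j} \<times> gen_sigma {j+m..}. dependence A B)"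
  unfolding alpha_coef_def dependence_def by (simp add: case_prod_beta)

lemma dependence_le_1: "dependence A B \<le> 1"
proof -
  have "measure \<mu> (A \<inter> B) \<le> 1" "measure \<mu> A * measure \<mu> B \<le> 1"
    "0 \<le> measure \<mu> (A \<inter> B)" "0 \<le> measure \<mu> A * measure \<mu> B"
    by (auto intro!: mult_le_one)
  then show ?thesis unfolding dependence_def abs_le_iff by linarith
qed

lemma dependence_SUP_le_1:
  "(\<Squnion>(A, B)\<in>gen_sigma {1..j} \<times> gen_sigma {j+m..}. dependence A B) \<le> 1"
  using empty_in_gen_sigma by (intro cSUP_least) (auto intro: dependence_le_1)

lemma bdd_above_dependence: "bdd_above ((\<lambda>(A, B). dependence A B) ` X)"
  using dependence_le_1 by (intro bdd_aboveI[where M=1]) auto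

lemma bdd_above_dependence_SUP:
  "bdd_above ((\<lambda>j. \<Squnion>(A, B)\<in>gen_sigma {1..j} \<times> gen_sigma {j+m..}. dependence A B) ` X)"
  using dependence_SUP_le_1 by (intro bdd_aboveI[where M=1]) auto

lemma dependence_le_alpha_coef:
  assumes "1 \<le> j" "A \<in> gen_sigma {1..j}" "B \<in> gen_sigma {j+m..}"
  shows "dependence A B \<le> alpha_coef \<mu> m"
proof -
  have "dependence A B \<le> (\<Squnion>(A, B)\<in>gen_sigma {1..j} \<times> gen_sigma {j+m..}. dependence A B)"
    using assms by (intro cSUP_upper2[OF bdd_above_dependence]) auto
  also have "\<dots> \<le> alpha_coef \<mu> m"
    unfolding alpha_coef_altdef using assms by (intro cSUP_upper2[OF bdd_above_dependence_SUP]) auto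
  finally show ?thesis .
qed

lemma alpha_coef_nonneg: "0 \<le> alpha_coef \<mu> m"
  using dependence_le_alpha_coef[of 1 "{}" "{}" m] empty_in_gen_sigma
  by (simp add: dependence_def)

lemma alpha_coef_antimono:
  assumes "m \<le> m'" shows "alpha_coef \<mu> m' \<le> alpha_coef \<mu> m"
  unfolding alpha_coef_altdef
proof (intro cSUP_mono bdd_above_dependence_SUP)
  fix j :: nat assume j: "j \<in> {1..}"
  have "gen_sigma {j+m'..} \<subseteq> gen_sigma {j+m..}"
    using assms by (intro gen_sigma_mono) auto
  then have "(\<Squnion>(A, B)\<in>gen_sigma {1..j} \<times> gen_sigma {j+m'..}. dependence A B)
      \<le> (\<Squnion>(A, B)\<in>gen_sigma {1..j} \<times> gen_sigma {j+m..}. dependence A B)"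
    using empty_in_gen_sigma by (intro cSUP_subset_mono bdd_above_dependence) auto
  then show "\<exists>j'\<in>{1..}. (\<Squnion>(A, B)\<in>gen_sigma {1..j} \<times> gen_sigma {j+m'..}. dependence A B)
      \<le> (\<Squnion>(A, B)\<in>gen_sigma {1..j'} \<times> gen_sigma {j'+m..}. dependence A B)"
    using j by blast
qed auto

definition alpha_sum :: real where
  "alpha_sum = (\<Sum>m. alpha_coef \<mu> (Suc m))"

lemma alpha_sum_nonneg: "0 \<le> alpha_sum"
  unfolding alpha_sum_def using summable_alpha_coef alpha_coef_nonneg by (intro suminf_nonneg) auto

lemma sum_alpha_coef_le_alpha_sum: "(\<Sum>d\<in>{1..N}. alpha_coef \<mu> d) \<le> alpha_sum"
proof -
  have "(\<Sum>d\<in>{1..N}. alpha_coef \<mu> d) = (\<Sum>d<N. alpha_coef \<mu> (Suc d))"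
    by (induction N) auto
  also have "\<dots> \<le> alpha_sum"
    unfolding alpha_sum_def using summable_alpha_coef alpha_coef_nonneg by (intro sum_le_suminf) auto
  finally show ?thesis .
qed

end

subsection \<open>Concentration of block frequencies\<close>

lemma sum_dist_le_twice_sum:
  fixes h :: "nat \<Rightarrow> real"
  assumes h: "\<And>d. 0 \<le> h d" and i: "i < t"
  shows "(\<Sum>i'\<in>{..<t} - {i}. h (if i' < i then i - i' else i' - i)) \<le> 2 * (\<Sum>d\<in>{1..t}. h d)"
proof -
  have split: "{..<t} - {i} = {..<i} \<union> {i<..<t}" using i by auto
  have "(\<Sum>i'\<in>{..<t} - {i}. h (if i' < i then i - i' else i' - i))
      = (\<Sum>i'\<in>{..<i}. h (i - i')) + (\<Sum>i'\<in>{i<..<t}. h (i' - i))"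
    unfolding split by (subst sum.union_disjoint) (auto intro!: sum.cong)
  also have "(\<Sum>i'\<in>{..<i}. h (i - i')) = (\<Sum>d\<in>(\<lambda>i'. i - i') ` {..<i}. h d)"
    by (subst sum.reindex) (auto simp: inj_on_def)
  also have "\<dots> \<le> (\<Sum>d\<in>{1..t}. h d)"
    using i by (intro sum_mono2) (auto simp: h)
  also have "(\<Sum>i'\<in>{i<..<t}. h (i' - i)) = (\<Sum>d\<in>(\<lambda>i'. i' - i) ` {i<..<t}. h d)"
    by (subst sum.reindex) (auto simp: inj_on_def)
  also have "\<dots> \<le> (\<Sum>d\<in>{1..t}. h d)"
    by (intro sum_mono2) (auto simp: h)
  finally show ?thesis by simp
qed

context prob_space
begin

lemma variance_indicator_average:
  assumes E: "\<And>i. E i \<in> events" and p: "\<And>i. prob (E i) = p" and t: "0 < t"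
  shows "variance (\<lambda>\<omega>. (\<Sum>i<t. indicator (E i) \<omega>) / real t)
    = (\<Sum>i<t. \<Sum>i'<t. prob (E i \<inter> E i') - p\<^sup>2) / (real t)\<^sup>2"
proof -
  define I where "I i = (indicator (E i) :: _ \<Rightarrow> real)" for i
  have int_ind: "integrable M (indicator A :: _ \<Rightarrow> real)" if "A \<in> events" for A
    using that by (intro integrable_real_indicator) (auto simp: less_top[symmetric])
  have EI: "expectation (I i) = p" for i
    unfolding I_def using E p by simp
  have "expectation (\<lambda>\<omega>. (\<Sum>i<t. I i \<omega>) / real t) = p"
    using int_ind[OF E] t by (simp add: I_def[symmetric] EI)
  moreover have "((\<Sum>i<t. I i \<omega>) / real t - p)\<^sup>2
      = (\<Sum>i<t. \<Sum>i'<t. (I i \<omega> - p) * (I i' \<omega> - p)) / (real t)\<^sup>2" for \<omega>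
  proof -
    have "(\<Sum>i<t. I i \<omega>) / real t - p = (\<Sum>i<t. I i \<omega> - p) / real t"
      using t by (simp add: sum_subtractf field_simps)
    then show ?thesis by (simp add: power2_eq_square sum_product power_divide)
  qed
  moreover have "integrable M (\<lambda>\<omega>. (I i \<omega> - p) * (I i' \<omega> - p))"
    and "expectation (\<lambda>\<omega>. (I i \<omega> - p) * (I i' \<omega> - p)) = prob (E i \<inter> E i') - p\<^sup>2" for i i'
  proof -
    have prod: "(\<lambda>\<omega>. (I i \<omega> - p) * (I i' \<omega> - p))
        = (\<lambda>\<omega>. indicator (E i \<inter> E i') \<omega> - p * I i \<omega> - p * I i' \<omega> + p\<^sup>2)"
      unfolding I_def by (simp add: fun_eq_iff indicator_inter_arith power2_eq_square algebra_simps)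
    show "integrable M (\<lambda>\<omega>. (I i \<omega> - p) * (I i' \<omega> - p))"
      unfolding prod unfolding I_def using E by (simp add: less_top[symmetric])
    show "expectation (\<lambda>\<omega>. (I i \<omega> - p) * (I i' \<omega> - p)) = prob (E i \<inter> E i') - p\<^sup>2"
      unfolding prod using int_ind E p unfolding I_def by (simp add: power2_eq_square prob_space)
  qed
  ultimately show ?thesis
    unfolding I_def by simp
qed

end

context mixing_process
begin

lemma block_events_covariance_le:
  assumes k: "1 \<le> k" "k \<le> s"
    and G: "\<And>a. G a \<in> gen_sigma {a+1..a+k}" and p: "\<And>a. measure \<mu> (G a) = p"
    and "i < i'"
  shows "measure \<mu> (G (i * s) \<inter> G (i' * s)) - p\<^sup>2 \<le> alpha_coef \<mu> (i' - i)"
proof -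
  define j where "j = i * s + k"
  define d where "d = i' - i - 1"
  define g where "g = i' * s + 1 - j"
  have i'_eq: "i' = i + d + 1" using \<open>i < i'\<close> unfolding d_def by simp
  then have i': "i' * s = i * s + d * s + s" by (simp add: algebra_simps)
  have "d \<le> d * s" using k by simp
  then have "d + k \<le> d * s + s" using k by linarith
  then have gap: "i' - i \<le> g" and jg: "j + g = i' * s + 1"
    using k i' i'_eq unfolding g_def j_def by linarith+
  have "G (i * s) \<in> gen_sigma {1..j}"
    using G[of "i * s"] gen_sigma_mono[of "{i * s + 1..i * s + k}" "{1..j}"] unfolding j_def by auto
  moreover have "G (i' * s) \<in> gen_sigma {j+g..}"
    using G[of "i' * s"] gen_sigma_mono[of "{i' * s + 1..i' * s + k}" "{j+g..}"] unfolding jg by auto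
  moreover have "1 \<le> j" using k unfolding j_def by simp
  ultimately have "dependence (G (i * s)) (G (i' * s)) \<le> alpha_coef \<mu> g"
    by (intro dependence_le_alpha_coef)
  also have "\<dots> \<le> alpha_coef \<mu> (i' - i)"
    using gap by (rule alpha_coef_antimono)
  finally show ?thesis using p by (simp add: dependence_def power2_eq_square)
qed

lemma variance_block_average_le:
  assumes k: "1 \<le> k" "k \<le> s"
    and G: "\<And>a. G a \<in> gen_sigma {a+1..a+k}" and p: "\<And>a. measure \<mu> (G a) = p"
    and t: "0 < t"
  shows "variance (\<lambda>\<omega>. (\<Sum>i<t. indicator (G (i * s)) \<omega>) / real t) \<le> (1 + 2 * alpha_sum) / real t"
proof -
  have events: "G a \<in> events" for a using G gen_sigma_subset_sets_mu by blast
  have row: "(\<Sum>i'<t. measure \<mu> (G (i * s) \<inter> G (i' * s)) - p\<^sup>2) \<le> 1 + 2 * alpha_sum"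
    if i: "i < t" for i
  proof -
    have cov: "measure \<mu> (G (i * s) \<inter> G (i' * s)) - p\<^sup>2
        \<le> alpha_coef \<mu> (if i' < i then i - i' else i' - i)" if "i' \<noteq> i" for i'
      using block_events_covariance_le[OF k G p, of i i'] block_events_covariance_le[OF k G p, of i' i]
        that by (cases "i < i'") (auto simp: Int_commute)
    have "(\<Sum>i'<t. measure \<mu> (G (i * s) \<inter> G (i' * s)) - p\<^sup>2)
        = (measure \<mu> (G (i * s)) - p\<^sup>2) + (\<Sum>i'\<in>{..<t} - {i}. measure \<mu> (G (i * s) \<inter> G (i' * s)) - p\<^sup>2)"
      using i by (subst sum.remove[of _ i]) auto
    also have "\<dots> \<le> 1 + (\<Sum>i'\<in>{..<t} - {i}. alpha_coef \<mu> (if i' < i then i - i' else i' - i))"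
    proof (intro add_mono sum_mono)
      show "measure \<mu> (G (i * s)) - p\<^sup>2 \<le> 1"
        using prob_le_1[of "G (i * s)"] zero_le_power2[of p] by linarith
    qed (use cov in auto)
    also have "\<dots> \<le> 1 + 2 * (\<Sum>d\<in>{1..t}. alpha_coef \<mu> d)"
      using sum_dist_le_twice_sum[OF alpha_coef_nonneg i] by simp
    also have "\<dots> \<le> 1 + 2 * alpha_sum"
      using sum_alpha_coef_le_alpha_sum by simp
    finally show ?thesis .
  qed
  have "variance (\<lambda>\<omega>. (\<Sum>i<t. indicator (G (i * s)) \<omega>) / real t)
      = (\<Sum>i<t. \<Sum>i'<t. measure \<mu> (G (i * s) \<inter> G (i' * s)) - p\<^sup>2) / (real t)\<^sup>2"
    using events p t by (rule variance_indicator_average)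
  also have "\<dots> \<le> (\<Sum>i<t. 1 + 2 * alpha_sum) / (real t)\<^sup>2"
    using row by (intro divide_right_mono sum_mono) auto
  also have "\<dots> = (1 + 2 * alpha_sum) / real t"
    using t by (simp add: power2_eq_square)
  finally show ?thesis .
qed

definition block_deviation :: "(nat \<Rightarrow> (nat \<Rightarrow> real) set) \<Rightarrow> nat \<Rightarrow> nat \<Rightarrow> real \<Rightarrow> (nat \<Rightarrow> real) set" where
  "block_deviation G s t c =
     {\<omega> \<in> space \<mu>. c \<le> \<bar>(\<Sum>i<t. indicator (G (i * s)) \<omega>) / real t - measure \<mu> (G 0)\<bar>}"

lemma sets_block_deviation:
  assumes [measurable]: "\<And>a. G a \<in> sets \<mu>"
  shows "block_deviation G s t c \<in> sets \<mu>"
  unfolding block_deviation_def by measurable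

text \<open>Chebyshev's inequality, with summability of the mixing coefficients in place of
  independence.\<close>

lemma measure_block_deviation_le:
  assumes k: "1 \<le> k" "k \<le> s"
    and G: "\<And>a. G a \<in> gen_sigma {a+1..a+k}" and p: "\<And>a. measure \<mu> (G a) = measure \<mu> (G 0)"
    and t: "0 < t" and c: "0 < c"
  shows "measure \<mu> (block_deviation G s t c) \<le> (1 + 2 * alpha_sum) / (real t * c\<^sup>2)"
proof -
  define f where "f \<omega> = (\<Sum>i<t. indicator (G (i * s)) \<omega>) / real t" for \<omega>
  have events[measurable]: "G a \<in> events" for a using G gen_sigma_subset_sets_mu by blast
  have "expectation f = (\<Sum>i<t. measure \<mu> (G (i * s))) / real t"
    unfolding f_def by (simp add: integrable_real_indicator less_top[symmetric])
  also have "\<dots> = measure \<mu> (G 0)"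
    using t by (simp add: sum.cong[OF refl p])
  finally have "expectation f = measure \<mu> (G 0)" .
  moreover have "0 \<le> f \<omega> \<and> f \<omega> \<le> 1" for \<omega>
    unfolding f_def using average_indicator_bounds[where G="\<lambda>i. G (i * s)" and t=t] by simp
  then have "integrable \<mu> (\<lambda>\<omega>. f \<omega> ^ 2)"
    by (intro integrable_const_bound[where B=1]) (auto intro!: power_le_one simp: f_def)
  ultimately have "prob (block_deviation G s t c) \<le> variance f / c\<^sup>2"
    using Chebyshev_inequality[of f c] c unfolding f_def block_deviation_def by simp
  also have "\<dots> \<le> ((1 + 2 * alpha_sum) / real t) / c\<^sup>2"
    unfolding f_def using variance_block_average_le[OF k G p t] by (intro divide_right_mono) auto
  finally show ?thesis by (simp add: field_simps)
qed

end

subsection \<open>Events controlling the estimator\<close>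

definition empirical_dependence ::
    "(nat \<Rightarrow> real) \<Rightarrow> nat \<Rightarrow> nat \<Rightarrow> nat \<Rightarrow> nat \<Rightarrow> real list set \<Rightarrow> real list set \<Rightarrow> real" where
  "empirical_dependence \<omega> t n m j A B =
     \<bar>gam_emp \<omega> t n m j A B - mu_emp \<omega> j t A * mu_emp \<omega> (n - m - j + 1) t B\<bar>"

text \<open>The event counted by \<open>\<gamma>^{m,j}_{t,n}\<close> in the block starting after position \<open>a\<close>.\<close>

definition gap_event ::
    "nat \<Rightarrow> nat \<Rightarrow> nat \<Rightarrow> nat \<Rightarrow> nat list set \<Rightarrow> nat list set \<Rightarrow> nat \<Rightarrow> (nat \<Rightarrow> real) set" where
  "gap_event n l m j SA SB a = cylinder a j l SA \<inter> cylinder (a + j + m - 1) (n - m - j + 1) l SB"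

lemma gap_event_shift:
  assumes "1 \<le> m"
  shows "gap_event n l m j SA SB (a + b) = shift_path a -` gap_event n l m j SA SB b \<inter> space Omega"
proof -
  have "a + b + j + m - 1 = a + (b + j + m - 1)" using assms by simp
  then show ?thesis
    unfolding gap_event_def using cylinder_shift[of a b] cylinder_shift[of a "b + j + m - 1"] by auto
qed

lemma gap_event_in_gen_sigma:
  assumes "1 \<le> m" "m < n" "1 \<le> j" "j \<le> n - m"
  shows "gap_event n l m j SA SB a \<in> gen_sigma {a+1..a+n}"
proof -
  interpret G: sigma_algebra "space Omega" "gen_sigma {a+1..a+n}"
    by (rule sigma_algebra_gen_sigma)
  have "j \<le> n" using assms by simp
  then have "cylinder a j l SA \<in> gen_sigma {a+1..a+n}"
    using cylinder_in_gen_sigma[of a j l SA] gen_sigma_mono[of "{a+1..a+j}" "{a+1..a+n}"] by auto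
  moreover have "cylinder (a + j + m - 1) (n - m - j + 1) l SB \<in> gen_sigma {a+1..a+n}"
    using cylinder_in_gen_sigma[of "a + j + m - 1" "n - m - j + 1" l SB]
      gen_sigma_mono[of "{a + j + m - 1 + 1..a + j + m - 1 + (n - m - j + 1)}" "{a+1..a+n}"] assms
    by auto
  ultimately show ?thesis unfolding gap_event_def by (rule G.Int)
qed

lemma mu_emp_dyadic_union:
  assumes "\<omega> \<in> space Omega" "S \<subseteq> dyadic_cube_indices k l"
  shows "mu_emp \<omega> k t (\<Union>(dyadic_cube l ` S)) = (\<Sum>i<t. indicator (cylinder (i * k) k l S) \<omega>) / real t"
  unfolding mu_emp_def using indicator_dyadic_union_seg[OF assms] by simp

lemma gam_emp_dyadic_unions:
  assumes "\<omega> \<in> space Omega" "SA \<subseteq> dyadic_cube_indices j l"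
    "SB \<subseteq> dyadic_cube_indices (n - m - j + 1) l"
  shows "gam_emp \<omega> t n m j (\<Union>(dyadic_cube l ` SA)) (\<Union>(dyadic_cube l ` SB))
       = (\<Sum>i<t. indicator (gap_event n l m j SA SB (i * n)) \<omega>) / real t"
  unfolding gam_emp_def gap_event_def
  using indicator_dyadic_union_seg[OF assms(1,2)] indicator_dyadic_union_seg[OF assms(1,3)]
  by (simp add: indicator_inter_arith)

context mixing_process
begin

lemma measure_gap_event_shift:
  assumes "1 \<le> m"
  shows "measure \<mu> (gap_event n l m j SA SB a) = measure \<mu> (gap_event n l m j SA SB 0)"
proof -
  have "gap_event n l m j SA SB 0 \<in> sets Omega"
    unfolding gap_event_def using sets_cylinder by auto
  then show ?thesis
    using measure_shift_path_vimage[of "gap_event n l m j SA SB 0" a] gap_event_shift[OF assms, of n l j SA SB a 0]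
    by simp
qed

definition deviation_event ::
    "nat \<Rightarrow> nat \<Rightarrow> nat \<Rightarrow> nat \<Rightarrow> nat list set \<Rightarrow> nat list set \<Rightarrow> nat \<Rightarrow> real \<Rightarrow> (nat \<Rightarrow> real) set" where
  "deviation_event n l m j SA SB t c =
     block_deviation (\<lambda>a. cylinder a j l SA) j t c \<union>
     block_deviation (\<lambda>a. cylinder a (n - m - j + 1) l SB) (n - m - j + 1) t c \<union>
     block_deviation (gap_event n l m j SA SB) n t c"

lemma sets_gap_event_mu[measurable]: "gap_event n l m j SA SB a \<in> sets \<mu>"
  unfolding gap_event_def by simp

lemma sets_deviation_event: "deviation_event n l m j SA SB t c \<in> sets \<mu>"
  unfolding deviation_event_def by (intro sets.Un sets_block_deviation) simp_all

lemma measure_deviation_event_le: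
  assumes "1 \<le> m" "m < n" "1 \<le> j" "j \<le> n - m" "0 < t" "0 < c"
  shows "measure \<mu> (deviation_event n l m j SA SB t c) \<le> 3 * ((1 + 2 * alpha_sum) / (real t * c\<^sup>2))"
proof -
  let ?j' = "n - m - j + 1"
  define b where "b = (1 + 2 * alpha_sum) / (real t * c\<^sup>2)"
  have "measure \<mu> (block_deviation (\<lambda>a. cylinder a j l SA) j t c) \<le> b"
    unfolding b_def using assms
    by (intro measure_block_deviation_le[where k=j] cylinder_in_gen_sigma measure_cylinder_shift) auto
  moreover have "measure \<mu> (block_deviation (\<lambda>a. cylinder a ?j' l SB) ?j' t c) \<le> b"
    unfolding b_def
    by (intro measure_block_deviation_le[where k="?j'"] cylinder_in_gen_sigma measure_cylinder_shift)
      (use assms in auto)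
  moreover have "measure \<mu> (block_deviation (gap_event n l m j SA SB) n t c) \<le> b"
    unfolding b_def
    by (intro measure_block_deviation_le[where k=n] measure_gap_event_shift)
      (use assms in \<open>auto intro: gap_event_in_gen_sigma[simplified]\<close>)
  moreover have "measure \<mu> (deviation_event n l m j SA SB t c) \<le>
      measure \<mu> (block_deviation (\<lambda>a. cylinder a j l SA) j t c)
      + measure \<mu> (block_deviation (\<lambda>a. cylinder a ?j' l SB) ?j' t c)
      + measure \<mu> (block_deviation (gap_event n l m j SA SB) n t c)"
    unfolding deviation_event_def
    by (intro order_trans[OF measure_Un_le] add_mono order_refl sets.Un sets_block_deviation)
      simp_all
  ultimately show ?thesis unfolding b_def[symmetric] by linarith
qed

lemma empirical_dependence_close:
  assumes "\<omega> \<in> space \<mu>" "\<omega> \<notin> deviation_event n l m j SA SB t c"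
    and SA: "SA \<subseteq> dyadic_cube_indices j l" and SB: "SB \<subseteq> dyadic_cube_indices (n - m - j + 1) l"
  shows "\<bar>empirical_dependence \<omega> t n m j (\<Union>(dyadic_cube l ` SA)) (\<Union>(dyadic_cube l ` SB))
    - dependence (cylinder 0 j l SA) (cylinder (j + m - 1) (n - m - j + 1) l SB)\<bar> < 3 * c"
proof -
  let ?j' = "n - m - j + 1"
  have \<omega>: "\<omega> \<in> space Omega" using assms(1) space_eq by simp
  define a where "a = (\<Sum>i<t. indicator (cylinder (i * j) j l SA) \<omega>) / real t"
  define b where "b = (\<Sum>i<t. indicator (cylinder (i * ?j') ?j' l SB) \<omega>) / real t"
  define g where "g = (\<Sum>i<t. indicator (gap_event n l m j SA SB (i * n)) \<omega>) / real t"
  define pa where "pa = measure \<mu> (cylinder 0 j l SA)"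
  define pb where "pb = measure \<mu> (cylinder (j + m - 1) ?j' l SB)"
  define q where "q = measure \<mu> (gap_event n l m j SA SB 0)"
  have "pb = measure \<mu> (cylinder 0 ?j' l SB)"
    unfolding pb_def by (rule measure_cylinder_shift)
  then have da: "\<bar>a - pa\<bar> < c" and db: "\<bar>b - pb\<bar> < c" and dg: "\<bar>g - q\<bar> < c"
    using assms(1,2) unfolding deviation_event_def block_deviation_def a_def b_def g_def pa_def q_def
    by auto
  have "\<bar>a * b - pa * pb\<bar> \<le> \<bar>a - pa\<bar> + \<bar>b - pb\<bar>"
    unfolding b_def pa_def by (intro abs_mult_diff_le average_indicator_bounds) auto
  moreover have "empirical_dependence \<omega> t n m j (\<Union>(dyadic_cube l ` SA)) (\<Union>(dyadic_cube l ` SB))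
      = \<bar>g - a * b\<bar>"
    unfolding empirical_dependence_def gam_emp_dyadic_unions[OF \<omega> SA SB]
      mu_emp_dyadic_union[OF \<omega> SA] mu_emp_dyadic_union[OF \<omega> SB] a_def b_def g_def ..
  moreover have "dependence (cylinder 0 j l SA) (cylinder (j + m - 1) ?j' l SB) = \<bar>q - pa * pb\<bar>"
    unfolding dependence_def q_def pa_def pb_def gap_event_def by simp
  ultimately show ?thesis using da db dg by linarith
qed

end

subsection \<open>Almost sure accuracy of the estimates\<close>

lemma le_two_power_pred: "(n::nat) \<le> 2^(n - 1)"
proof (induction n)
  case (Suc n) then show ?case by (cases n) auto
qed simp

text \<open>Adding the logarithmic cardinalities \<open>2^{jl}\<close>, \<open>2^{j'l}\<close> of the two families of
  dyadic unions to \<open>n + m + 1\<close> stays within the exponent of \<open>C_{m,l,n}\<close>.\<close>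

lemma card_exponent_le:
  fixes l m n j :: nat
  assumes l: "1 \<le> l" and m: "1 \<le> m" "m < n" and j: "1 \<le> j" "j \<le> n - m"
  shows "2^(j * l) + 2^((n - m - j + 1) * l) + n + m + 1 \<le> 2^(n * l) + 2^(m * l + 1)"
proof -
  define L :: nat where "L = 2^l"
  define j' where "j' = n - m - j + 1"
  define u :: nat where "u = 2^((j - 1) * l)"
  define v :: nat where "v = 2^((j' - 1) * l)"
  define P :: nat where "P = 2^((n - 1) * l)"
  have L2: "2 \<le> L" unfolding L_def using l by (metis one_le_numeral power_increasing power_one_right)
  have j'1: "1 \<le> j'" unfolding j'_def by simp
  have uv: "1 \<le> u" "1 \<le> v" unfolding u_def v_def by auto
  have xu: "2^(j * l) = L * u" unfolding L_def u_def using j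
    by (metis One_nat_def Suc_diff_le diff_Suc_1 mult_Suc power_add)
  have yv: "2^(j' * l) = L * v" unfolding L_def v_def using j'1
    by (metis One_nat_def Suc_diff_le diff_Suc_1 mult_Suc power_add)
  have "L * (u * v) = 2^((1 + (j - 1) + (j' - 1)) * l)"
    unfolding L_def u_def v_def by (simp add: power_add add_mult_distrib)
  also have "\<dots> \<le> P"
    unfolding P_def using j m j'1 by (intro power_increasing mult_le_mono1) (auto simp: j'_def)
  finally have uvP: "L * (u * v) \<le> P" .
  obtain a b where "u = Suc a" "v = Suc b" using uv by (metis Suc_le_D One_nat_def)
  then have "u + v \<le> u * v + 1" by simp
  then have "L * (u + v) \<le> L * (u * v + 1)" by (rule mult_le_mono2)
  then have s1: "2^(j * l) + 2^(j' * l) \<le> P + L"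
    using xu yv uvP by (simp add: algebra_simps)
  have "n \<le> 2^(n - 1)" by (rule le_two_power_pred)
  also have "(2::nat)^(n - 1) \<le> P" unfolding P_def using l by (intro power_increasing) auto
  finally have "n \<le> P" .
  moreover have "2^(n * l) = L * P" unfolding L_def P_def using m
    by (metis Suc_diff_1 le_less_trans mult_Suc power_add zero_less_one less_imp_le_nat less_le_trans)
  ultimately have s2: "P + n \<le> 2^(n * l)" using L2
    by (metis add_le_mono le_refl mult_2 mult_le_mono1 order_trans)
  have "L \<le> L^m" using L2 m by (metis One_nat_def power_increasing power_one_right le_trans one_le_numeral)
  moreover have "m + 1 \<le> 2^m" using less_exp[of m] by (simp add: Suc_le_eq)
  moreover have "(2::nat)^m \<le> L^m" using L2 by (simp add: power_mono)
  moreover have "2^(m * l + 1) = 2 * L^m" unfolding L_def by (simp add: power_mult mult.commute)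
  ultimately have s3: "L + m + 1 \<le> 2^(m * l + 1)" by linarith
  show ?thesis using s1 s2 s3 unfolding j'_def[symmetric] by linarith
qed

lemma tau_pos:
  assumes "1 \<le> m" "0 < \<delta>s t" "0 < \<epsilon> t"
  shows "0 < tau ls ns \<delta>s \<epsilon> t m"
    and "1 / (real (tau ls ns \<delta>s \<epsilon> t m) * (\<epsilon> t)\<^sup>2) \<le> real m * \<delta>s t / real (C_const m (ls t) (ns t))"
proof -
  define C where "C = real (C_const m (ls t) (ns t))"
  define x where "x = C / (real m * (\<epsilon> t)\<^sup>2 * \<delta>s t)"
  have "0 < C" unfolding C_def C_const_def using assms by simp
  then have x: "0 < x" unfolding x_def using assms by (intro divide_pos_pos mult_pos_pos) auto
  have ge: "x \<le> real (tau ls ns \<delta>s \<epsilon> t m)"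
    using x le_of_int_ceiling[of x] unfolding tau_def x_def[symmetric] C_def[symmetric] by linarith
  then show "0 < tau ls ns \<delta>s \<epsilon> t m" using x by linarith
  have "1 / (real (tau ls ns \<delta>s \<epsilon> t m) * (\<epsilon> t)\<^sup>2) \<le> 1 / (x * (\<epsilon> t)\<^sup>2)"
    using ge x assms by (intro divide_left_mono mult_right_mono mult_pos_pos) auto
  also have "\<dots> = real m * \<delta>s t / C" unfolding x_def using assms \<open>0 < C\<close> by (simp add: field_simps)
  finally show "1 / (real (tau ls ns \<delta>s \<epsilon> t m) * (\<epsilon> t)\<^sup>2) \<le> real m * \<delta>s t / real (C_const m (ls t) (ns t))"
    unfolding C_def .
qed

lemma sum_inverse_two_power_le_1: "(\<Sum>m\<in>{1..M}. 1 / (2::real)^m) \<le> 1"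
proof -
  have "(\<Sum>m\<in>{1..M}. 1 / (2::real)^m) = 1 - 1 / 2^M"
    by (induction M) (auto simp: field_simps)
  then show ?thesis by simp
qed

lemma card_dyadic_unions_le_C_const:
  assumes l: "1 \<le> l" and m: "1 \<le> m" "m < n" and j: "1 \<le> j" "j \<le> n - m"
  shows "real (card (Pow (dyadic_cube_indices j l))) * real (card (Pow (dyadic_cube_indices (n - m - j + 1) l)))
      * real m / real (C_const m l n) \<le> 1 / (2^n * 2^m)"
proof -
  define x :: nat where "x = 2^(l * j) + 2^(l * (n - m - j + 1))"
  define E :: nat where "E = 2^(n * l) + 2^(m * l + 1) + 1"
  have "x + (n + m + 1) \<le> E"
    using card_exponent_le[OF l m j] unfolding x_def E_def by (simp add: mult.commute)
  then have le: "(2::real)^x * 2^(n + m + 1) \<le> 2^E"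
    by (metis power_add power_increasing one_le_numeral)
  have "real (card (Pow (dyadic_cube_indices j l))) * real (card (Pow (dyadic_cube_indices (n - m - j + 1) l)))
      * real m / real (C_const m l n) = 2^x / 2^E"
    using m unfolding x_def E_def C_const_def
    by (simp add: card_Pow finite_dyadic_cube_indices card_dyadic_cube_indices power_add)
  also have "\<dots> \<le> 1 / 2^(n + m + 1)"
    using le by (simp add: field_simps)
  also have "\<dots> \<le> 1 / (2^n * 2^m)"
    by (simp add: power_add field_simps)
  finally show ?thesis .
qed

lemma (in prob_space) measure_UN_UN_le:
  assumes "finite A" "finite B" "\<And>a b. D a b \<in> events" "\<And>a b. a \<in> A \<Longrightarrow> b \<in> B \<Longrightarrow> prob (D a b) \<le> r"
  shows "prob (\<Union>a\<in>A. \<Union>b\<in>B. D a b) \<le> real (card A) * (real (card B) * r)"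
proof -
  have "prob (\<Union>a\<in>A. \<Union>b\<in>B. D a b) \<le> (\<Sum>a\<in>A. prob (\<Union>b\<in>B. D a b))"
    using assms by (intro measure_UNION_le sets.finite_UN) auto
  also have "\<dots> \<le> real (card A) * (real (card B) * r)"
  proof (rule sum_bounded_above)
    fix a assume "a \<in> A"
    have "prob (\<Union>b\<in>B. D a b) \<le> (\<Sum>b\<in>B. prob (D a b))"
      using assms by (intro measure_UNION_le) auto
    also have "\<dots> \<le> real (card B) * r"
      using assms \<open>a \<in> A\<close> by (intro sum_bounded_above) auto
    finally show "prob (\<Union>b\<in>B. D a b) \<le> real (card B) * r" .
  qed
  finally show ?thesis .
qed

locale test_parameters = mixing_process +
  fixes Ms ls ns :: "nat \<Rightarrow> nat" and \<delta>s \<epsilon> :: "nat \<Rightarrow> real"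
  assumes ls_pos: "\<And>t. 0 < ls t" and Ms_less_ns: "\<And>t. Ms t < ns t"
    and \<delta>s_pos: "\<And>t. 0 < \<delta>s t" and summable_\<delta>s: "summable \<delta>s"
    and \<epsilon>_pos: "\<And>t. 0 < \<epsilon> t"
begin

definition bad_event :: "nat \<Rightarrow> (nat \<Rightarrow> real) set" where
  "bad_event t = (\<Union>m\<in>{1..Ms t}. \<Union>j\<in>{1..ns t - m}.
     \<Union>SA \<in> Pow (dyadic_cube_indices j (ls t)). \<Union>SB \<in> Pow (dyadic_cube_indices (ns t - m - j + 1) (ls t)).
       deviation_event (ns t) (ls t) m j SA SB (tau ls ns \<delta>s \<epsilon> t m) (\<epsilon> t / 3))"

lemma sets_bad_event: "bad_event t \<in> sets \<mu>"
  unfolding bad_event_def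
  by (intro sets.finite_UN finite_Pow_iff[THEN iffD2] finite_dyadic_cube_indices finite_atLeastAtMost
      sets_deviation_event ballI)

text \<open>\<open>27 = 3 \<cdot> 3\<^sup>2\<close>: three frequencies, each controlled to precision \<open>\<epsilon>_t / 3\<close>.\<close>

definition bad_event_constant :: real where
  "bad_event_constant = 27 * (1 + 2 * alpha_sum)"

lemma bad_event_constant_nonneg: "0 \<le> bad_event_constant"
  unfolding bad_event_constant_def using alpha_sum_nonneg by simp

lemma measure_deviation_events_le:
  assumes m: "m \<in> {1..Ms t}" and j: "j \<in> {1..ns t - m}"
  shows "measure \<mu> (\<Union>SA \<in> Pow (dyadic_cube_indices j (ls t)).
      \<Union>SB \<in> Pow (dyadic_cube_indices (ns t - m - j + 1) (ls t)).
        deviation_event (ns t) (ls t) m j SA SB (tau ls ns \<delta>s \<epsilon> t m) (\<epsilon> t / 3))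
    \<le> bad_event_constant * \<delta>s t / (2^ns t * 2^m)"
    (is "measure \<mu> (\<Union>SA \<in> ?A. \<Union>SB \<in> ?B. ?D SA SB) \<le> _")
proof -
  define K where "K = bad_event_constant"
  define r where "r = real m * \<delta>s t / real (C_const m (ls t) (ns t))"
  let ?tt = "tau ls ns \<delta>s \<epsilon> t m"
  have mn: "1 \<le> m" "m < ns t" using m Ms_less_ns[of t] by auto
  have K: "0 \<le> K" unfolding K_def by (rule bad_event_constant_nonneg)
  have tt: "0 < ?tt" "1 / (real ?tt * (\<epsilon> t)\<^sup>2) \<le> r"
    using tau_pos[OF mn(1) \<delta>s_pos \<epsilon>_pos] unfolding r_def by auto
  have "measure \<mu> (?D SA SB) \<le> 3 * ((1 + 2 * alpha_sum) / (real ?tt * (\<epsilon> t / 3)\<^sup>2))" for SA SB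
    using j mn tt \<epsilon>_pos[of t] by (intro measure_deviation_event_le) auto
  also have "\<dots> = K * (1 / (real ?tt * (\<epsilon> t)\<^sup>2))"
    unfolding K_def bad_event_constant_def by (simp add: power2_eq_square field_simps)
  also have "\<dots> \<le> K * r"
    using mult_left_mono[OF tt(2) K] by simp
  finally have "measure \<mu> (?D SA SB) \<le> K * r" for SA SB .
  then have "measure \<mu> (\<Union>SA \<in> ?A. \<Union>SB \<in> ?B. ?D SA SB) \<le> real (card ?A) * (real (card ?B) * (K * r))"
    by (intro measure_UN_UN_le sets_deviation_event) (auto simp: finite_dyadic_cube_indices)
  also have "\<dots> = K * \<delta>s t * (real (card ?A) * real (card ?B) * real m / real (C_const m (ls t) (ns t)))"
    unfolding r_def by (simp add: field_simps)
  also have "\<dots> \<le> K * \<delta>s t * (1 / (2^ns t * 2^m))"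
    using K \<delta>s_pos[of t] ls_pos[of t] mn j
    by (intro mult_left_mono card_dyadic_unions_le_C_const) auto
  finally show ?thesis unfolding K_def by simp
qed

lemma measure_bad_event_le: "measure \<mu> (bad_event t) \<le> bad_event_constant * \<delta>s t"
proof -
  define n where "n = ns t"
  define K where "K = bad_event_constant"
  have K: "0 \<le> K * \<delta>s t" unfolding K_def using bad_event_constant_nonneg \<delta>s_pos[of t] by simp
  let ?E = "\<lambda>m j. \<Union>SA \<in> Pow (dyadic_cube_indices j (ls t)).
      \<Union>SB \<in> Pow (dyadic_cube_indices (ns t - m - j + 1) (ls t)).
        deviation_event (ns t) (ls t) m j SA SB (tau ls ns \<delta>s \<epsilon> t m) (\<epsilon> t / 3)"
  have sets_E: "?E m j \<in> sets \<mu>" for m j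
    by (intro sets.finite_UN sets_deviation_event) (auto simp: finite_dyadic_cube_indices)
  have row: "measure \<mu> (\<Union>j\<in>{1..n - m}. ?E m j) \<le> K * \<delta>s t / 2^m" if m: "m \<in> {1..Ms t}" for m
  proof -
    have "measure \<mu> (\<Union>j\<in>{1..n - m}. ?E m j) \<le> (\<Sum>j\<in>{1..n - m}. measure \<mu> (?E m j))"
      using sets_E by (intro measure_UNION_le) auto
    also have "\<dots> \<le> real (card {1..n - m}) * (K * \<delta>s t / (2^n * 2^m))"
      using measure_deviation_events_le[OF m] unfolding K_def n_def by (intro sum_bounded_above) auto
    also have "\<dots> \<le> 2^n * (K * \<delta>s t / (2^n * 2^m))"
    proof (intro mult_right_mono)
      have "real (card {1..n - m}) \<le> real n" by simp
      also have "\<dots> \<le> 2^n" using less_exp[of n] by (simp add: less_imp_le)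
      finally show "real (card {1..n - m}) \<le> 2^n" .
    qed (use K in simp)
    finally show ?thesis by simp
  qed
  have "measure \<mu> (bad_event t) \<le> (\<Sum>m\<in>{1..Ms t}. measure \<mu> (\<Union>j\<in>{1..n - m}. ?E m j))"
    unfolding bad_event_def n_def
    by (intro measure_UNION_le sets.finite_UN sets_E finite_atLeastAtMost ballI)
  also have "\<dots> \<le> (\<Sum>m\<in>{1..Ms t}. K * \<delta>s t * (1 / 2^m))"
    using row by (intro sum_mono) auto
  also have "\<dots> \<le> K * \<delta>s t"
    using mult_left_mono[OF sum_inverse_two_power_le_1 K] by (simp add: sum_distrib_left)
  finally show ?thesis unfolding K_def .
qed

lemma AE_eventually_not_bad_event: "AE \<omega> in \<mu>. eventually (\<lambda>t. \<omega> \<notin> bad_event t) sequentially"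
proof -
  have "summable (\<lambda>t. measure \<mu> (bad_event t))"
    using measure_bad_event_le
    by (intro summable_comparison_test[OF _ summable_mult[OF summable_\<delta>s, of bad_event_constant]]) auto
  then have "AE \<omega> in \<mu>. eventually (\<lambda>t. \<omega> \<in> space \<mu> - bad_event t) sequentially"
    by (intro borel_cantelli_AE1) (auto simp: sets_bad_event less_top[symmetric])
  then show ?thesis by (rule AE_mp) (auto elim!: eventually_mono)
qed

lemma empirical_dependence_accurate:
  assumes "\<omega> \<in> space \<mu>" "\<omega> \<notin> bad_event t"
    and "m \<in> {1..Ms t}" "j \<in> {1..ns t - m}"
    and SA: "SA \<subseteq> dyadic_cube_indices j (ls t)"
    and SB: "SB \<subseteq> dyadic_cube_indices (ns t - m - j + 1) (ls t)"
  shows "\<bar>empirical_dependence \<omega> (tau ls ns \<delta>s \<epsilon> t m) (ns t) m j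
      (\<Union>(dyadic_cube (ls t) ` SA)) (\<Union>(dyadic_cube (ls t) ` SB))
    - dependence (cylinder 0 j (ls t) SA) (cylinder (j + m - 1) (ns t - m - j + 1) (ls t) SB)\<bar>
    < \<epsilon> t"
proof -
  have "\<omega> \<notin> deviation_event (ns t) (ls t) m j SA SB (tau ls ns \<delta>s \<epsilon> t m) (\<epsilon> t / 3)"
    using assms unfolding bad_event_def by blast
  from empirical_dependence_close[OF assms(1) this SA SB] show ?thesis by simp
qed

end

subsection \<open>Acceptance when the rate is respected\<close>

lemma finite_dyadic_unions: "finite (dyadic_unions k l)"
proof -
  have "dyadic_unions k l = (\<lambda>S. \<Union>(dyadic_cube l ` S)) ` Pow (dyadic_cube_indices k l)"
    unfolding dyadic_unions_def by auto
  then show ?thesis using finite_dyadic_cube_indices by simp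
qed

lemma dyadic_unionsI: "S \<subseteq> dyadic_cube_indices k l \<Longrightarrow> \<Union>(dyadic_cube l ` S) \<in> dyadic_unions k l"
  unfolding dyadic_unions_def by auto

lemma dyadic_unionsE:
  assumes "A \<in> dyadic_unions k l"
  obtains S where "S \<subseteq> dyadic_cube_indices k l" "A = \<Union>(dyadic_cube l ` S)"
  using assms unfolding dyadic_unions_def by auto

lemma alpha_hat_eq_Max:
  "alpha_hat \<omega> t n l m = Max ((\<lambda>(j, A, B). empirical_dependence \<omega> t n m j A B) `
     (SIGMA j:{1..n - m}. dyadic_unions j l \<times> dyadic_unions (n - m - j + 1) l))"
  unfolding alpha_hat_def empirical_dependence_def by (rule arg_cong[where f=Max]) force

lemma finite_alpha_hat_index: "finite (SIGMA j:{1..n - m}. dyadic_unions j l \<times> dyadic_unions (n - m - j + 1) l)"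
  by (intro finite_SigmaI finite_cartesian_product finite_dyadic_unions) auto

lemma empirical_dependence_le_alpha_hat:
  assumes "j \<in> {1..n - m}" "A \<in> dyadic_unions j l" "B \<in> dyadic_unions (n - m - j + 1) l"
  shows "empirical_dependence \<omega> t n m j A B \<le> alpha_hat \<omega> t n l m"
  unfolding alpha_hat_eq_Max using assms
  by (intro Max_ge finite_imageI finite_alpha_hat_index) force

lemma alpha_hat_le:
  assumes "m < n"
    and "\<And>j A B. j \<in> {1..n - m} \<Longrightarrow> A \<in> dyadic_unions j l \<Longrightarrow> B \<in> dyadic_unions (n - m - j + 1) l
      \<Longrightarrow> empirical_dependence \<omega> t n m j A B \<le> b"
  shows "alpha_hat \<omega> t n l m \<le> b"
proof -
  have "(1, {}, {}) \<in> (SIGMA j:{1..n - m}. dyadic_unions j l \<times> dyadic_unions (n - m - j + 1) l)"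
    using assms(1) dyadic_unionsI[of "{}"] by auto
  then have "(SIGMA j:{1..n - m}. dyadic_unions j l \<times> dyadic_unions (n - m - j + 1) l) \<noteq> {}"
    by blast
  then show ?thesis unfolding alpha_hat_eq_Max using assms(2) finite_alpha_hat_index[of n m l]
    by (subst Max_le_iff) auto
qed

context mixing_process
begin

lemma dependence_cylinders_le_alpha_coef:
  assumes "1 \<le> j"
  shows "dependence (cylinder 0 j l SA) (cylinder (j + m - 1) k l' SB) \<le> alpha_coef \<mu> m"
proof (rule dependence_le_alpha_coef[OF assms])
  show "cylinder 0 j l SA \<in> gen_sigma {1..j}"
    using cylinder_in_gen_sigma[of 0 j l SA] by simp
  show "cylinder (j + m - 1) k l' SB \<in> gen_sigma {j + m..}"
    using cylinder_in_gen_sigma[of "j + m - 1" k l' SB] assms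
      gen_sigma_mono[of "{j + m - 1 + 1..j + m - 1 + k}" "{j + m..}"] by auto
qed

end

context test_parameters
begin

lemma test_g_eq_one:
  assumes \<gamma>: "\<And>m. 1 \<le> m \<Longrightarrow> alpha_coef \<mu> m \<le> \<gamma> m"
    and "\<omega> \<in> space \<mu>" "\<omega> \<notin> bad_event t"
  shows "test_g \<gamma> Ms ls ns \<delta>s \<epsilon> t \<omega> = 1"
proof -
  have "alpha_hat_t ls ns \<delta>s \<epsilon> t \<omega> m \<le> \<gamma> m + \<epsilon> t" if m: "m \<in> {1..Ms t}" for m
    unfolding alpha_hat_t_def
  proof (rule alpha_hat_le)
    show "m < ns t" using m Ms_less_ns[of t] by auto
    fix j A B assume j: "j \<in> {1..ns t - m}" and A: "A \<in> dyadic_unions j (ls t)"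
      and B: "B \<in> dyadic_unions (ns t - m - j + 1) (ls t)"
    obtain SA where SA: "SA \<subseteq> dyadic_cube_indices j (ls t)" "A = \<Union>(dyadic_cube (ls t) ` SA)"
      using A by (rule dyadic_unionsE)
    obtain SB where SB: "SB \<subseteq> dyadic_cube_indices (ns t - m - j + 1) (ls t)"
      "B = \<Union>(dyadic_cube (ls t) ` SB)"
      using B by (rule dyadic_unionsE)
    have "dependence (cylinder 0 j (ls t) SA) (cylinder (j + m - 1) (ns t - m - j + 1) (ls t) SB)
        \<le> \<gamma> m"
      using dependence_cylinders_le_alpha_coef \<gamma> m j by (meson atLeastAtMost_iff order_trans)
    then show "empirical_dependence \<omega> (tau ls ns \<delta>s \<epsilon> t m) (ns t) m j A B \<le> \<gamma> m + \<epsilon> t"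
      using empirical_dependence_accurate[OF assms(2,3) m j SA(1) SB(1)] unfolding SA(2) SB(2)
      by linarith
  qed
  then show ?thesis unfolding test_g_def by auto
qed

lemma test_tendsto_one:
  assumes "\<And>m. 1 \<le> m \<Longrightarrow> alpha_coef \<mu> m \<le> \<gamma> m"
  shows "AE \<omega> in \<mu>. (\<lambda>t. test_g \<gamma> Ms ls ns \<delta>s \<epsilon> t \<omega>) \<longlonglongrightarrow> 1"
  using AE_eventually_not_bad_event
proof (rule AE_mp, intro AE_I2 impI)
  fix \<omega> assume "\<omega> \<in> space \<mu>" "eventually (\<lambda>t. \<omega> \<notin> bad_event t) sequentially"
  then have "eventually (\<lambda>t. test_g \<gamma> Ms ls ns \<delta>s \<epsilon> t \<omega> = 1) sequentially"
    by (auto elim!: eventually_mono intro: test_g_eq_one[OF assms])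
  then show "(\<lambda>t. test_g \<gamma> Ms ls ns \<delta>s \<epsilon> t \<omega>) \<longlonglongrightarrow> 1"
    by (rule tendsto_eventually)
qed

end

subsection \<open>Approximating past and future events by cylinders\<close>

context prob_space
begin

lemma prob_diff_le_sym_diff:
  assumes "X \<in> events" "Y \<in> events"
  shows "\<bar>prob X - prob Y\<bar> \<le> prob (sym_diff X Y)"
proof -
  have "prob X \<le> prob (Y \<union> sym_diff X Y)" "prob Y \<le> prob (X \<union> sym_diff X Y)"
    using assms by (auto intro!: finite_measure_mono)
  moreover have "prob (Y \<union> sym_diff X Y) \<le> prob Y + prob (sym_diff X Y)"
    "prob (X \<union> sym_diff X Y) \<le> prob X + prob (sym_diff X Y)"
    using assms by (auto intro!: measure_Un_le)
  ultimately show ?thesis by linarith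
qed

text \<open>Approximate a long enough finite union (continuity from below) term by term.\<close>

lemma approx_UN:
  fixes A :: "nat \<Rightarrow> 'a set"
  assumes A: "\<And>i. A i \<in> events" and F: "F \<subseteq> events" "{} \<in> F" "\<And>X Y. X \<in> F \<Longrightarrow> Y \<in> F \<Longrightarrow> X \<union> Y \<in> F"
    and approx: "\<And>i e. 0 < e \<Longrightarrow> \<exists>C\<in>F. prob (sym_diff (A i) C) < e"
    and e: "0 < e"
  shows "\<exists>C\<in>F. prob (sym_diff (\<Union>i. A i) C) < e"
proof -
  have F_UN: "(\<Union>i\<in>I. C i) \<in> F" if "finite I" "\<And>i. i \<in> I \<Longrightarrow> C i \<in> F" for I C
    using that by (induction I rule: finite_induct) (auto intro: F)
  have "incseq (\<lambda>N. \<Union>i<N. A i)"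
    unfolding incseq_def by (intro allI impI UN_mono) auto
  then have "(\<lambda>N. prob (\<Union>i<N. A i)) \<longlonglongrightarrow> prob (\<Union>N. \<Union>i<N. A i)"
    using A by (intro finite_Lim_measure_incseq) auto
  moreover have "(\<Union>N. \<Union>i<N. A i) = (\<Union>i. A i)" by auto
  ultimately have "eventually (\<lambda>N. prob (\<Union>i. A i) - e / 2 < prob (\<Union>i<N. A i)) sequentially"
    using e by (intro order_tendstoD(1)) auto
  then obtain N where "prob (\<Union>i. A i) - e / 2 < prob (\<Union>i<N. A i)"
    unfolding eventually_sequentially by blast
  then have N: "prob (\<Union>i. A i) - prob (\<Union>i<N. A i) < e / 2" by linarith
  have "\<forall>i. \<exists>C\<in>F. prob (sym_diff (A i) C) < e / (2 * (real N + 1))"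
    using approx e by simp
  then obtain C where C: "\<And>i. C i \<in> F" "\<And>i. prob (sym_diff (A i) (C i)) < e / (2 * (real N + 1))"
    by metis
  have events: "C i \<in> events" for i using C(1) F(1) by blast
  have "sym_diff (\<Union>i. A i) (\<Union>i<N. C i) \<subseteq> ((\<Union>i. A i) - (\<Union>i<N. A i)) \<union> (\<Union>i<N. sym_diff (A i) (C i))"
    by blast
  then have "prob (sym_diff (\<Union>i. A i) (\<Union>i<N. C i))
      \<le> prob ((\<Union>i. A i) - (\<Union>i<N. A i)) + prob (\<Union>i<N. sym_diff (A i) (C i))"
    using A events by (intro order_trans[OF finite_measure_mono measure_Un_le]) auto
  also have "prob ((\<Union>i. A i) - (\<Union>i<N. A i)) = prob (\<Union>i. A i) - prob (\<Union>i<N. A i)"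
    using A by (intro finite_measure_Diff) auto
  also have "prob (\<Union>i<N. sym_diff (A i) (C i)) \<le> (\<Sum>i<N. prob (sym_diff (A i) (C i)))"
    using A events by (intro measure_UNION_le) auto
  also have "\<dots> \<le> (\<Sum>i<N. e / (2 * (real N + 1)))"
    using C(2) by (intro sum_mono less_imp_le)
  also have "\<dots> = real N * (e / (2 * (real N + 1)))"
    by simp
  also have "\<dots> < e / 2"
    using e by (simp add: field_simps)
  finally show ?thesis
    using N F_UN[of "{..<N}" C] C(1) by (intro bexI[of _ "\<Union>i<N. C i"]) auto
qed

end

definition cylinder_algebra :: "nat \<Rightarrow> nat set \<Rightarrow> (nat \<Rightarrow> real) set set" where
  "cylinder_algebra a K = {cylinder a k l S | k l S. k \<in> K \<and> S \<subseteq> dyadic_cube_indices k l}"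

lemma cylinder_algebra_subset_sets: "cylinder_algebra a K \<subseteq> sets Omega"
  unfolding cylinder_algebra_def using sets_cylinder by auto

lemma cylinder_algebra_subset_Pow: "cylinder_algebra a K \<subseteq> Pow (space Omega)"
  unfolding cylinder_algebra_def using cylinder_subset_space by blast

lemma empty_in_cylinder_algebra: "K \<noteq> {} \<Longrightarrow> {} \<in> cylinder_algebra a K"
  unfolding cylinder_algebra_def cylinder_def by blast

lemma compl_in_cylinder_algebra: "X \<in> cylinder_algebra a K \<Longrightarrow> space Omega - X \<in> cylinder_algebra a K"
  unfolding cylinder_algebra_def using cylinder_compl by blast

lemma Un_in_cylinder_algebra:
  assumes K: "\<And>k1 k2. k1 \<in> K \<Longrightarrow> k2 \<in> K \<Longrightarrow> max k1 k2 \<in> K"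
    and "X \<in> cylinder_algebra a K" "Y \<in> cylinder_algebra a K"
  shows "X \<union> Y \<in> cylinder_algebra a K"
proof -
  obtain k1 l1 S1 where X: "X = cylinder a k1 l1 S1" "k1 \<in> K"
    using assms(2) unfolding cylinder_algebra_def by auto
  obtain k2 l2 S2 where Y: "Y = cylinder a k2 l2 S2" "k2 \<in> K"
    using assms(3) unfolding cylinder_algebra_def by auto
  define k where "k = max k1 k2"
  define l where "l = max l1 l2"
  have "X \<union> Y = cylinder a k l (refine_codes k1 l1 k l S1 \<union> refine_codes k2 l2 k l S2)"
    unfolding X Y cylinder_Un[symmetric] k_def l_def by (subst (1 2) cylinder_refine) auto
  moreover have "k \<in> K" unfolding k_def using X Y K by auto
  ultimately show ?thesis
    unfolding cylinder_algebra_def using refine_codes_subset by blast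
qed

text \<open>A coordinate is the limit of its dyadic quantizations, which are measurable with respect
  to the cylinders.\<close>

lemma gen_sigma_subset_cylinder_algebra:
  assumes T: "\<And>t. t \<in> T \<Longrightarrow> \<exists>k\<in>K. a < t \<and> t \<le> a + k"
  shows "gen_sigma T \<subseteq> sigma_sets (space Omega) (cylinder_algebra a K)"
proof -
  define M where "M = sigma (space Omega) (cylinder_algebra a K)"
  have sets_M: "sets M = sigma_sets (space Omega) (cylinder_algebra a K)"
    unfolding M_def using cylinder_algebra_subset_Pow by (rule sets_measure_of)
  have space_M: "space M = space Omega"
    unfolding M_def using cylinder_algebra_subset_Pow by (rule space_measure_of)
  have "coord t \<in> borel_measurable M" if t: "t \<in> T" for t
  proof -
    obtain k where k: "k \<in> K" "a < t" "t \<le> a + k" using T[OF t] by auto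
    define r where "r = t - 1 - a"
    have r: "r < k" "a + r = t - 1" unfolding r_def using k by auto
    define f where "f l \<omega> = real (dyadic_index l (\<omega> (t - 1))) / 2^l" for l \<omega>
    have "f l \<in> borel_measurable M" for l
    proof (rule measurableI)
      fix U :: "real set"
      have "f l -` U \<inter> space M = cylinder a k l {c \<in> dyadic_cube_indices k l. real (c ! r) / 2^l \<in> U}"
        unfolding space_M cylinder_def f_def using r dyadic_code_in_indices by auto
      also have "\<dots> \<in> sets M" unfolding sets_M cylinder_algebra_def using k by blast
      finally show "f l -` U \<inter> space M \<in> sets M" .
    qed simp
    moreover have "(\<lambda>l. f l \<omega>) \<longlonglongrightarrow> coord t \<omega>" if "\<omega> \<in> space M" for \<omega>
    proof -
      have \<omega>: "\<omega> (t - 1) \<in> {0..1}" using that space_M space_OmegaD by auto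
      have "(\<lambda>l. f l \<omega> - \<omega> (t - 1)) \<longlonglongrightarrow> 0"
      proof (rule Lim_null_comparison)
        show "\<forall>\<^sub>F l in sequentially. norm (f l \<omega> - \<omega> (t - 1)) \<le> inverse (2 ^ l)"
          using dyadic_index_approx[OF \<omega>] unfolding f_def by (simp add: divide_inverse)
      qed (rule LIMSEQ_inverse_realpow_zero, simp)
      then show ?thesis unfolding coord_def by (rule LIM_zero_cancel)
    qed
    ultimately show ?thesis by (rule borel_measurable_LIMSEQ_real[rotated])
  qed
  then have "coord t -` B \<inter> space Omega \<in> sigma_sets (space Omega) (cylinder_algebra a K)"
    if "t \<in> T" "B \<in> sets borel" for t B
    using that measurable_sets[of "coord t" M borel B] sets_M space_M by auto
  then show ?thesis unfolding gen_sigma_def by (intro sigma_sets_mono) auto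
qed

context mixing_process
begin

lemma sigma_sets_cylinder_algebra_approx:
  assumes K: "\<And>k1 k2. k1 \<in> K \<Longrightarrow> k2 \<in> K \<Longrightarrow> max k1 k2 \<in> K" "K \<noteq> {}"
  shows "E \<in> sigma_sets (space Omega) (cylinder_algebra a K) \<Longrightarrow> 0 < e
    \<Longrightarrow> \<exists>C\<in>cylinder_algebra a K. measure \<mu> (sym_diff E C) < e"
proof (induction arbitrary: e rule: sigma_sets.induct)
  case (Basic E)
  then show ?case by (intro bexI[of _ E]) (auto)
next
  case Empty
  then show ?case using empty_in_cylinder_algebra[OF K(2)] by (intro bexI[of _ "{}"]) (auto)
next
  case (Compl E)
  obtain C where C: "C \<in> cylinder_algebra a K" "measure \<mu> (sym_diff E C) < e" using Compl by auto
  have "E \<subseteq> space Omega" "C \<subseteq> space Omega"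
    using Compl.hyps sigma_sets_into_sp[OF cylinder_algebra_subset_Pow] C(1) cylinder_algebra_subset_Pow
    by blast+
  then have "sym_diff (space Omega - E) (space Omega - C) = sym_diff E C"
    by blast
  then show ?case using C compl_in_cylinder_algebra by metis
next
  case (Union A)
  have "sigma_sets (space Omega) (cylinder_algebra a K) \<subseteq> sets \<mu>"
    unfolding sets_eq by (rule sets.sigma_sets_subset[OF cylinder_algebra_subset_sets])
  then show ?case
    using Union cylinder_algebra_subset_sets sets_eq empty_in_cylinder_algebra[OF K(2)]
      Un_in_cylinder_algebra[OF K(1)]
    by (intro approx_UN) auto
qed

lemma approx_by_past_cylinder:
  assumes "A \<in> gen_sigma {1..j}" "0 < e"
  obtains l S where "S \<subseteq> dyadic_cube_indices j l" "measure \<mu> (sym_diff A (cylinder 0 j l S)) < e"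
proof -
  have "A \<in> sigma_sets (space Omega) (cylinder_algebra 0 {j})"
    using gen_sigma_subset_cylinder_algebra[of "{1..j}" "{j}" 0] assms(1) by auto
  then have "\<exists>C\<in>cylinder_algebra 0 {j}. measure \<mu> (sym_diff A C) < e"
    using sigma_sets_cylinder_algebra_approx[of "{j}"] assms(2) by simp
  then obtain C where "C \<in> cylinder_algebra 0 {j}" "measure \<mu> (sym_diff A C) < e" ..
  then show ?thesis
    using that unfolding cylinder_algebra_def by blast
qed

lemma approx_by_future_cylinder:
  assumes "1 \<le> s" "B \<in> gen_sigma {s..}" "0 < e"
  obtains k l S where "S \<subseteq> dyadic_cube_indices k l"
    "measure \<mu> (sym_diff B (cylinder (s - 1) k l S)) < e"
proof -
  have "B \<in> sigma_sets (space Omega) (cylinder_algebra (s - 1) UNIV)"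
  proof (rule subsetD[OF gen_sigma_subset_cylinder_algebra assms(2)])
    show "\<exists>k\<in>UNIV. s - 1 < t \<and> t \<le> s - 1 + k" if "t \<in> {s..}" for t
      using that assms(1) by (intro bexI[of _ t]) auto
  qed
  then have "\<exists>C\<in>cylinder_algebra (s - 1) UNIV. measure \<mu> (sym_diff B C) < e"
    using sigma_sets_cylinder_algebra_approx[of UNIV] assms(3) by simp
  then obtain C where "C \<in> cylinder_algebra (s - 1) UNIV" "measure \<mu> (sym_diff B C) < e" ..
  then show ?thesis
    using that unfolding cylinder_algebra_def by blast
qed

lemma dependence_sym_diff_le:
  assumes "A \<in> sets \<mu>" "B \<in> sets \<mu>" "A' \<in> sets \<mu>" "B' \<in> sets \<mu>"
  shows "dependence A B \<le> dependence A' B' + 2 * measure \<mu> (sym_diff A A') + 2 * measure \<mu> (sym_diff B B')"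
proof -
  have "\<bar>measure \<mu> (A \<inter> B) - measure \<mu> (A' \<inter> B')\<bar> \<le> measure \<mu> (sym_diff (A \<inter> B) (A' \<inter> B'))"
    using assms by (intro prob_diff_le_sym_diff) auto
  also have "\<dots> \<le> measure \<mu> (sym_diff A A' \<union> sym_diff B B')"
    using assms by (intro finite_measure_mono) (auto)
  also have "\<dots> \<le> measure \<mu> (sym_diff A A') + measure \<mu> (sym_diff B B')"
    using assms by (intro measure_Un_le) auto
  finally have cap: "\<bar>measure \<mu> (A \<inter> B) - measure \<mu> (A' \<inter> B')\<bar>
      \<le> measure \<mu> (sym_diff A A') + measure \<mu> (sym_diff B B')" .
  have "\<bar>measure \<mu> A * measure \<mu> B - measure \<mu> A' * measure \<mu> B'\<bar>
      \<le> \<bar>measure \<mu> A - measure \<mu> A'\<bar> + \<bar>measure \<mu> B - measure \<mu> B'\<bar>"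
    by (intro abs_mult_diff_le) auto
  also have "\<dots> \<le> measure \<mu> (sym_diff A A') + measure \<mu> (sym_diff B B')"
    using assms by (auto intro!: add_mono prob_diff_le_sym_diff)
  finally show ?thesis using cap unfolding dependence_def by linarith
qed

end

subsection \<open>Rejection when the rate is violated\<close>

context mixing_process
begin

lemma exists_dependent_cylinders:
  assumes "1 \<le> m" "c < alpha_coef \<mu> m"
  obtains j l1 S1 k l2 S2 where "1 \<le> j" "S1 \<subseteq> dyadic_cube_indices j l1" "S2 \<subseteq> dyadic_cube_indices k l2"
    "c < dependence (cylinder 0 j l1 S1) (cylinder (j + m - 1) k l2 S2)"
proof -
  obtain j where j: "1 \<le> j"
    and "c < (\<Squnion>(A, B)\<in>gen_sigma {1..j} \<times> gen_sigma {j+m..}. dependence A B)"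
    using assms(2) unfolding alpha_coef_altdef
    by (subst (asm) less_cSUP_iff[OF _ bdd_above_dependence_SUP]) auto
  then obtain A B where A: "A \<in> gen_sigma {1..j}" and B: "B \<in> gen_sigma {j+m..}"
    and AB: "c < dependence A B"
    using empty_in_gen_sigma by (subst (asm) less_cSUP_iff[OF _ bdd_above_dependence]) auto
  define d where "d = dependence A B - c"
  have d: "0 < d" unfolding d_def using AB by simp
  obtain l1 S1 where S1: "S1 \<subseteq> dyadic_cube_indices j l1"
    and A': "measure \<mu> (sym_diff A (cylinder 0 j l1 S1)) < d / 4"
    by (rule approx_by_past_cylinder[OF A, where e = "d / 4"]) (use d in auto)
  obtain k l2 S2 where S2: "S2 \<subseteq> dyadic_cube_indices k l2"
    and B': "measure \<mu> (sym_diff B (cylinder (j + m - 1) k l2 S2)) < d / 4"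
    by (rule approx_by_future_cylinder[of "j + m" B "d / 4"]) (use B assms(1) d in auto)
  have "dependence A B \<le> dependence (cylinder 0 j l1 S1) (cylinder (j + m - 1) k l2 S2)
      + 2 * measure \<mu> (sym_diff A (cylinder 0 j l1 S1))
      + 2 * measure \<mu> (sym_diff B (cylinder (j + m - 1) k l2 S2))"
    using A B gen_sigma_subset_sets_mu by (intro dependence_sym_diff_le) auto
  then have "c < dependence (cylinder 0 j l1 S1) (cylinder (j + m - 1) k l2 S2)"
    using A' B' unfolding d_def by (simp add: field_simps)
  with j S1 S2 show ?thesis by (rule that)
qed

end

context test_parameters
begin

text \<open>Once the level and the block length of stage \<open>t\<close> exceed those of a pair of cylinders
  witnessing dependence beyond \<open>\<gamma> m\<close>, that pair is among the dyadic unions examined.\<close>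

lemma test_g_eq_minus_one:
  assumes m: "1 \<le> m" "m \<le> Ms t" and j: "1 \<le> j"
    and S1: "S1 \<subseteq> dyadic_cube_indices j l1" and S2: "S2 \<subseteq> dyadic_cube_indices k l2"
    and dep: "\<gamma> m + 2 * \<epsilon> t < dependence (cylinder 0 j l1 S1) (cylinder (j + m - 1) k l2 S2)"
    and large: "l1 \<le> ls t" "l2 \<le> ls t" "j + m + k \<le> ns t"
    and \<omega>: "\<omega> \<in> space \<mu>" "\<omega> \<notin> bad_event t"
  shows "test_g \<gamma> Ms ls ns \<delta>s \<epsilon> t \<omega> = -1"
proof -
  define n where "n = ns t"
  define l where "l = ls t"
  define j' where "j' = n - m - j + 1"
  define SA where "SA = refine_codes j l1 j l S1"
  define SB where "SB = refine_codes k l2 j' l S2"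
  have SA: "SA \<subseteq> dyadic_cube_indices j l" and SB: "SB \<subseteq> dyadic_cube_indices j' l"
    unfolding SA_def SB_def by (rule refine_codes_subset)+
  have jn: "j \<in> {1..n - m}" and "k \<le> j'" using j large unfolding n_def j'_def by auto
  then have "cylinder 0 j l1 S1 = cylinder 0 j l SA" "cylinder (j + m - 1) k l2 S2 = cylinder (j + m - 1) j' l SB"
    unfolding SA_def SB_def l_def using large by (intro cylinder_refine; simp)+
  then have "\<bar>empirical_dependence \<omega> (tau ls ns \<delta>s \<epsilon> t m) n m j
      (\<Union>(dyadic_cube l ` SA)) (\<Union>(dyadic_cube l ` SB))
    - dependence (cylinder 0 j l1 S1) (cylinder (j + m - 1) k l2 S2)\<bar> < \<epsilon> t"
    using empirical_dependence_accurate[OF \<omega>, of m j SA SB] m jn SA SB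
    unfolding n_def l_def j'_def by simp
  moreover have "empirical_dependence \<omega> (tau ls ns \<delta>s \<epsilon> t m) n m j
      (\<Union>(dyadic_cube l ` SA)) (\<Union>(dyadic_cube l ` SB)) \<le> alpha_hat_t ls ns \<delta>s \<epsilon> t \<omega> m"
    unfolding alpha_hat_t_def n_def[symmetric] l_def[symmetric]
    using jn SA SB unfolding j'_def by (intro empirical_dependence_le_alpha_hat dyadic_unionsI) auto
  ultimately have "\<gamma> m + \<epsilon> t < alpha_hat_t ls ns \<delta>s \<epsilon> t \<omega> m" using dep by linarith
  then show ?thesis unfolding test_g_def using m by force
qed

lemma test_tendsto_minus_one:
  assumes mono: "strict_mono Ms" "strict_mono ls" "strict_mono ns" and \<epsilon>: "\<epsilon> \<longlonglongrightarrow> 0"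
    and m: "1 \<le> m" and violation: "\<gamma> m < alpha_coef \<mu> m"
  shows "AE \<omega> in \<mu>. (\<lambda>t. test_g \<gamma> Ms ls ns \<delta>s \<epsilon> t \<omega>) \<longlonglongrightarrow> -1"
proof -
  obtain j l1 S1 k l2 S2 where j: "1 \<le> j" and S: "S1 \<subseteq> dyadic_cube_indices j l1"
    "S2 \<subseteq> dyadic_cube_indices k l2"
    and dep: "\<gamma> m < dependence (cylinder 0 j l1 S1) (cylinder (j + m - 1) k l2 S2)"
    by (rule exists_dependent_cylinders[OF m violation])
  define D where "D = dependence (cylinder 0 j l1 S1) (cylinder (j + m - 1) k l2 S2)"
  define d where "d = D - \<gamma> m"
  have "eventually (\<lambda>t. \<epsilon> t < d / 2) sequentially"
    using \<epsilon> dep unfolding d_def D_def by (intro order_tendstoD(2)) auto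
  moreover have "eventually (\<lambda>t. max l1 l2 + (j + m + k) + m \<le> t) sequentially"
    by (rule eventually_ge_at_top)
  ultimately have large: "eventually (\<lambda>t. \<epsilon> t < d / 2 \<and> l1 \<le> ls t \<and> l2 \<le> ls t \<and>
      j + m + k \<le> ns t \<and> m \<le> Ms t) sequentially"
  proof eventually_elim
    case (elim t)
    have "t \<le> ls t" "t \<le> ns t" "t \<le> Ms t"
      using mono by (simp_all add: strict_mono_imp_increasing)
    then show ?case using elim by linarith
  qed
  have minus: "test_g \<gamma> Ms ls ns \<delta>s \<epsilon> t \<omega> = -1"
    if \<omega>: "\<omega> \<in> space \<mu>" "\<omega> \<notin> bad_event t"
      and t: "\<epsilon> t < d / 2" "l1 \<le> ls t" "l2 \<le> ls t" "j + m + k \<le> ns t" "m \<le> Ms t" for t \<omega>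
  proof (rule test_g_eq_minus_one[OF m t(5) j S _ t(2-4) \<omega>])
    show "\<gamma> m + 2 * \<epsilon> t < dependence (cylinder 0 j l1 S1) (cylinder (j + m - 1) k l2 S2)"
      using t(1) unfolding D_def[symmetric] d_def by (simp add: field_simps)
  qed
  show ?thesis
    using AE_eventually_not_bad_event
  proof (rule AE_mp, intro AE_I2 impI)
    fix \<omega> assume \<omega>: "\<omega> \<in> space \<mu>" and good: "eventually (\<lambda>t. \<omega> \<notin> bad_event t) sequentially"
    from large good have "eventually (\<lambda>t. test_g \<gamma> Ms ls ns \<delta>s \<epsilon> t \<omega> = -1) sequentially"
      by eventually_elim (intro minus[OF \<omega>]; blast)
    then show "(\<lambda>t. test_g \<gamma> Ms ls ns \<delta>s \<epsilon> t \<omega>) \<longlonglongrightarrow> -1"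
      by (rule tendsto_eventually)
  qed
qed

end

theorem theorem7:
  fixes \<gamma> :: "nat \<Rightarrow> real"
    and Ms ls ns :: "nat \<Rightarrow> nat"
    and \<delta> :: real and \<delta>s \<epsilon> :: "nat \<Rightarrow> real"
    and \<mu> :: "(nat \<Rightarrow> real) measure"
  assumes gamma_range: "\<And>m. 0 \<le> \<gamma> m \<and> \<gamma> m \<le> 1"
    and Ms: "strict_mono Ms" "\<And>t. Ms t > 0"
    and ls: "strict_mono ls" "\<And>t. ls t > 0"
    and ns: "strict_mono ns" "\<And>t. ns t > 0"
    and ns_Ms: "\<And>t. ns t > Ms t"
    and delta: "0 < \<delta>" "\<delta> < 1" "\<And>t. \<delta>s t > 0" "\<delta>s sums \<delta>"
    and eps: "decseq \<epsilon>" "\<And>t. \<epsilon> t > 0" "\<epsilon> \<longlonglongrightarrow> 0"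
    and mu: "\<mu> \<in> class_C"
  shows "AE \<omega> in \<mu>. (\<lambda>t. test_g \<gamma> Ms ls ns \<delta>s \<epsilon> t \<omega>) \<longlonglongrightarrow>
                       (if \<mu> \<in> class_R \<gamma> then 1 else -1)"
proof -
  interpret test_parameters \<mu> Ms ls ns \<delta>s \<epsilon>
    using mu ls(2) ns_Ms delta(3,4) eps(2) by unfold_locales (auto simp: sums_summable)
  show ?thesis
  proof (cases "\<mu> \<in> class_R \<gamma>")
    case True
    then show ?thesis using test_tendsto_one[of \<gamma>] unfolding class_R_def by simp
  next
    case False
    then obtain m where "1 \<le> m" "\<gamma> m < alpha_coef \<mu> m"
      using mu unfolding class_R_def class_C_def by (auto simp: not_le)
    with False show ?thesis using test_tendsto_minus_one[OF Ms(1) ls(1) ns(1) eps(3)] by simp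
  qed
qed

end
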